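(* Let $d\ge 1$ and let $\mathbf{p}=(p_1,\dots,p_d)$ be a vector of nonzero real numbers. Then the collection $\mathcal{T}_d(\mathbf{p})$ of $d$-simplices in $\mathbb{R}^d$ constructed below is a simplicial tessellation of $\mathbb{R}^d$, so that $\mathbf{p}\mapsto\mathcal{T}_d(\mathbf{p})$ is a $d$-parametric family of simplicial tessellations. Every simplex $K\in\mathcal{T}_d(\mathbf{p})$ satisfies $$\operatorname{meas}_d K=\prod_{i=1}^d |p_i|.$$ Moreover, every connected compact subset of the tessellation (i.e. every finite subcollection of simplices of $\mathcal{T}_d(\mathbf{p})$ whose union is connected) is a face-to-face mesh.
   Context: Construction. Fix nonzero reals $p_1,\dots,p_d$. Inductively, for $m=1,\dots,d$, we define a collection $\mathcal{T}_m$ of $m$-simplices in $\mathbb{R}^m$ together with a coloring $c_m$ of their vertices by colors in $\{0,\dots,m\}$. (i) $m=1$: the vertices are $A_z=zp_1$, $z\in\mathbb{Z}$; the simplices are the segments between $zp_1$ and $(z+1)p_1$; the coloring is $c_1(A_z)=z \bmod 2$. (ii) Step $m-1\to m$ ($2\le m\le d$): put $c'=c_{m-1}$. For each $K\in\mathcal{T}_{m-1}$ label its vertices $A_0,\dots,A_{m-1}\in\mathbb{R}^{m-1}$ so that $c'(A_i)=i$. For $j\in\mathbb{Z}$ let $B^K_j=(A_{j \bmod m},\, jp_m)\in\mathbb{R}^m$ and for $z\in\mathbb{Z}$ let $L^{K,z}=\operatorname{conv}\{B^K_z,B^K_{z+1},\dots,B^K_{z+m}\}$ (convex hull of $m+1$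 consecutive points). Set $\mathcal{T}_m=\{L^{K,z}: K\in\mathcal{T}_{m-1},\ z\in\mathbb{Z}\}$. The vertices of $\mathcal{T}_m$ are the points $(A,jp_m)$ with $A$ a vertex of $\mathcal{T}_{m-1}$ and $j\equiv c'(A) \pmod m$, and they are colored by $c_m((A,jp_m))=j \bmod (m+1)$. Finally $\mathcal{T}_d(\mathbf{p}):=\mathcal{T}_d$. A simplicial tessellation of $\mathbb{R}^d$ is a collection of $d$-simplices covering $\mathbb{R}^d$ with pairwise disjoint interiors. A collection of simplices is a face-to-face mesh if any two of its simplices intersect either in the empty set or in a common face of both. $\operatorname{meas}_d$ denotes $d$-dimensional Lebesgue measure. *)

theory Defs
  imports "HOL-Analysis.Analysis"
begin

text \<open>A simplex of T_m is represented by the list of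
its m+1 vertices ordered by colour (entry i has colour i); a point of R^m is a
real list of length m.  The parameters are p 1, ..., p d.\<close>

fun tess_vertices :: "(nat \<Rightarrow> real) \<Rightarrow> nat \<Rightarrow> real list list set" where
  "tess_vertices p 0 = {}"
| "tess_vertices p (Suc 0) =
     (\<lambda>z::int. if z mod 2 = 0
               then [[of_int z * p 1], [of_int (z + 1) * p 1]]
               else [[of_int (z + 1) * p 1], [of_int z * p 1]]) ` UNIV"
| "tess_vertices p (Suc (Suc m)) =
     (\<lambda>(A, z::int).
        map (\<lambda>i. let j = z + ((int i - z) mod int (m + 3))
                 in A ! nat (j mod int (m + 2)) @ [of_int j * p (m + 2)])
            [0..<m + 3])
     ` (tess_vertices p (Suc m) \<times> UNIV)"

text \<open>Identification of real lists of length CARD('d) with vectors in real^'d,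
using the (arbitrary) linear order on the index type to order coordinates.\<close>

definition vec_of_list :: "real list \<Rightarrow> real ^ ('d::{finite,linorder})" where
  "vec_of_list xs = (\<chi> i. xs ! card {j. j < i})"

definition tess :: "(nat \<Rightarrow> real) \<Rightarrow> (real ^ ('d::{finite,linorder})) set set" where
  "tess p = (\<lambda>A. convex hull (set (map vec_of_list A))) ` tess_vertices p CARD('d)"

definition simplicial_tessellation :: "('a::euclidean_space) set set \<Rightarrow> bool" where
  "simplicial_tessellation T \<longleftrightarrow>
     (\<forall>K\<in>T. int DIM('a) simplex K) \<and> \<Union>T = UNIV \<and>
     (\<forall>K\<in>T. \<forall>K'\<in>T. K \<noteq> K' \<longrightarrow> interior K \<inter> interior K' = {})"

definition face_to_face_mesh :: "('a::euclidean_space) set set \<Rightarrow> bool" where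
  "face_to_face_mesh T \<longleftrightarrow>
     (\<forall>K\<in>T. \<forall>K'\<in>T. K \<inter> K' = {} \<or> (K \<inter> K' face_of K \<and> K \<inter> K' face_of K'))"

end

(*
  Over a simplex K of T_(m-1) with vertices A_0, ..., A_(m-1), the simplices of T_m are the
  windows of m + 1 consecutive points of the chain B_j = (A_(j mod m), j p_m).  The point over
  K with barycentric coordinates lam at height s p_m lies in the window starting at z exactly
  when F z <= s <= F (z + 1), where F z is the lam-average of the positions z, ..., z + m - 1;
  since F (z + 1) - F z = m lam_(z mod m) >= 0, these windows tile the prism over K.  By
  induction on m the simplices of T_m cover R^m, keep the colouring consistent, and any two of
  them meet in the hull of their common vertices, which is a face of both; hence the
  tessellation is face-to-face, and the interiors are disjoint.

  For the volume, a simplex in the first m coordinates is thickened by unit steps in the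
  remaining d - m directions.  An affine map of determinant m p_m carries a thickened simplex
  of T_(m-1) onto a thickened simplex of T_m, so a simplex of T_d has volume |p_1 ... p_d|.
*)
theory Submission
  imports Defs
begin

section \<open>Coordinates in rank order\<close>

text \<open>As in \<open>vec_of_list\<close>, the coordinates are numbered by their rank in the order of the
  index type; \<open>lower_space m\<close> is the copy of \<open>\<real>\<^sup>m\<close> spanned by the first \<open>m\<close> of them.\<close>

definition index_rank :: "'n::{finite,linorder} \<Rightarrow> nat" where
  "index_rank i = card {j. j < i}"

lemma index_rank_less_card: "index_rank (i::'n::{finite,linorder}) < CARD('n)"
  unfolding index_rank_def by (rule psubset_card_mono) auto

lemma strict_mono_index_rank: "strict_mono (index_rank :: 'n::{finite,linorder} \<Rightarrow> nat)"
  unfolding strict_mono_def index_rank_def by (auto intro!: psubset_card_mono)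

lemmas index_rank_less_iff = strict_mono_less[OF strict_mono_index_rank]
  and index_rank_eq_iff = strict_mono_eq[OF strict_mono_index_rank]

lemma bij_betw_index_rank: "bij_betw (index_rank :: 'n::{finite,linorder} \<Rightarrow> nat) UNIV {..<CARD('n)}"
proof -
  have inj: "inj (index_rank :: 'n \<Rightarrow> nat)"
    using strict_mono_index_rank by (rule strict_mono_imp_inj_on)
  moreover have "index_rank ` (UNIV::'n set) \<subseteq> {..<CARD('n)}"
    using index_rank_less_card by auto
  moreover have "card (index_rank ` (UNIV::'n set)) = card {..<CARD('n)}"
    using card_image[OF inj] by simp
  ultimately show ?thesis
    by (simp add: bij_betw_def card_subset_eq)
qed

lemma ex_index_rank_eq: "k < CARD('n::{finite,linorder}) \<Longrightarrow> \<exists>i::'n. index_rank i = k"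
  using bij_betw_index_rank unfolding bij_betw_def by (metis imageE lessThan_iff)

definition basis_vec :: "nat \<Rightarrow> (real, 'n::{finite,linorder}) vec" where
  "basis_vec k = (\<chi> i. if index_rank i = k then 1 else 0)"

definition pad_vec :: "real list \<Rightarrow> (real, 'n::{finite,linorder}) vec" where
  "pad_vec xs = (\<chi> i. if index_rank i < length xs then xs ! index_rank i else 0)"

definition lower_space :: "nat \<Rightarrow> ((real, 'n::{finite,linorder}) vec) set" where
  "lower_space m = {x. \<forall>i. m \<le> index_rank i \<longrightarrow> x $ i = 0}"

definition lower_part :: "nat \<Rightarrow> (real, 'n::{finite,linorder}) vec \<Rightarrow> (real, 'n::{finite,linorder}) vec" where
  "lower_part m x = (\<chi> i. if index_rank i < m then x $ i else 0)"

definition coord :: "nat \<Rightarrow> (real, 'n::{finite,linorder}) vec \<Rightarrow> real" where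
  "coord m x = x \<bullet> basis_vec m"

lemma basis_vec_nth: "basis_vec k $ i = (if index_rank i = k then 1 else 0)"
  by (simp add: basis_vec_def)

lemma basis_vec_index_rank: "basis_vec (index_rank j) = (axis j 1 :: (real, 'n::{finite,linorder}) vec)"
  by (auto simp: basis_vec_def axis_def vec_eq_iff index_rank_eq_iff)

lemma coord_eq_nth: "index_rank (i::'n::{finite,linorder}) = m \<Longrightarrow> coord m (x::(real, 'n) vec) = x $ i"
proof -
  assume i: "index_rank i = m"
  have "coord m x = (\<Sum>k\<in>UNIV. x $ k * (if index_rank k = m then 1 else 0))"
    by (simp add: coord_def inner_vec_def basis_vec_def)
  also have "\<dots> = (\<Sum>k\<in>{i}. x $ k)"
    by (rule sum.mono_neutral_cong_right) (auto simp: i[symmetric] index_rank_eq_iff)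
  finally show ?thesis by simp
qed

lemma coord_basis_vec:
  "l < CARD('n::{finite,linorder}) \<Longrightarrow> coord l (basis_vec k :: (real, 'n) vec) = (if k = l then 1 else 0)"
proof -
  assume "l < CARD('n)"
  then obtain i :: 'n where "index_rank i = l"
    using ex_index_rank_eq by blast
  then show ?thesis
    using coord_eq_nth[of i l] by (auto simp: basis_vec_nth)
qed

lemma linear_lower_part: "linear (lower_part m)"
  by (auto simp: linear_iff vec_eq_iff lower_part_def)

lemma linear_coord: "linear (coord m)"
  by (auto simp: linear_iff coord_def inner_add_left)

lemma lower_part_basis_vec: "l \<le> k \<Longrightarrow> lower_part l (basis_vec k) = 0"
  by (auto simp: lower_part_def basis_vec_nth vec_eq_iff)

lemma lower_part_id: "x \<in> lower_space m \<Longrightarrow> lower_part m x = x"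
  by (auto simp: lower_space_def lower_part_def vec_eq_iff)

lemma coord_lower_space: "x \<in> lower_space m \<Longrightarrow> coord m x = 0"
  by (auto simp: lower_space_def coord_def inner_vec_def basis_vec_def intro!: sum.neutral)

lemma lower_space_decomp:
  assumes "m < CARD('n::{finite,linorder})" "(x::(real, 'n) vec) \<in> lower_space (Suc m)"
  shows "x = lower_part m x + coord m x *\<^sub>R basis_vec m"
proof (subst vec_eq_iff, intro allI)
  fix i :: 'n
  show "x $ i = (lower_part m x + coord m x *\<^sub>R basis_vec m) $ i"
    using assms coord_eq_nth[of i m x]
    by (cases "index_rank i < m"; cases "index_rank i = m") (auto simp: lower_part_def basis_vec_def lower_space_def)
qed

lemma subspace_lower_space: "subspace (lower_space m)"
  by (auto simp: subspace_def lower_space_def)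

lemma lower_space_mono: "m \<le> k \<Longrightarrow> lower_space m \<subseteq> lower_space k"
  by (auto simp: lower_space_def)

lemma basis_vec_in_lower_space: "basis_vec m \<in> lower_space (Suc m)"
  by (auto simp: basis_vec_def lower_space_def)

lemma pad_vec_snoc:
  "length xs < CARD('n) \<Longrightarrow>
   (pad_vec (xs @ [r]) :: (real, 'n::{finite,linorder}) vec) = pad_vec xs + r *\<^sub>R basis_vec (length xs)"
  by (auto simp: vec_eq_iff pad_vec_def basis_vec_def nth_append)

lemma pad_vec_full:
  "length xs = CARD('n) \<Longrightarrow> (pad_vec xs :: (real, 'n::{finite,linorder}) vec) = vec_of_list xs"
  using index_rank_less_card by (auto simp: vec_eq_iff pad_vec_def vec_of_list_def index_rank_def[symmetric])

lemmas lower_part_simps =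
  linear_add[OF linear_lower_part] linear_scale[OF linear_lower_part] linear_sum[OF linear_lower_part]
  and coord_simps =
  linear_add[OF linear_coord] linear_scale[OF linear_coord] linear_sum[OF linear_coord]

section \<open>Barycentric coordinates\<close>

lemma convex_hull_finite_indexed:
  fixes f :: "'i \<Rightarrow> 'a::real_vector"
  assumes "finite I" "inj_on f I"
  shows "x \<in> convex hull (f ` I) \<longleftrightarrow>
    (\<exists>\<mu>. (\<forall>i\<in>I. 0 \<le> \<mu> i) \<and> sum \<mu> I = 1 \<and> (\<Sum>i\<in>I. \<mu> i *\<^sub>R f i) = x)"
proof
  assume "x \<in> convex hull (f ` I)"
  then obtain u where u: "\<forall>y\<in>f ` I. 0 \<le> u y" "sum u (f ` I) = 1" "(\<Sum>y\<in>f ` I. u y *\<^sub>R y) = x"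
    using convex_hull_finite[of "f ` I"] assms by auto
  show "\<exists>\<mu>. (\<forall>i\<in>I. 0 \<le> \<mu> i) \<and> sum \<mu> I = 1 \<and> (\<Sum>i\<in>I. \<mu> i *\<^sub>R f i) = x"
    using u sum.reindex[OF assms(2), of u] sum.reindex[OF assms(2), of "\<lambda>y. u y *\<^sub>R y"]
    by (intro exI[of _ "u \<circ> f"]) (simp add: o_def)
next
  assume "\<exists>\<mu>. (\<forall>i\<in>I. 0 \<le> \<mu> i) \<and> sum \<mu> I = 1 \<and> (\<Sum>i\<in>I. \<mu> i *\<^sub>R f i) = x"
  then obtain \<mu> where \<mu>: "\<forall>i\<in>I. 0 \<le> \<mu> i" "sum \<mu> I = 1" "(\<Sum>i\<in>I. \<mu> i *\<^sub>R f i) = x"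
    by blast
  have "(\<Sum>i\<in>I. \<mu> i *\<^sub>R f i) \<in> convex hull (f ` I)"
    by (rule convex_sum) (use \<mu> assms in \<open>auto intro: hull_inc\<close>)
  then show "x \<in> convex hull (f ` I)" using \<mu> by simp
qed

lemma convex_sum_in_hull_of_support:
  fixes f :: "'i \<Rightarrow> 'a::real_vector"
  assumes "finite I" "\<forall>i\<in>I. 0 \<le> \<mu> i" "sum \<mu> I = 1" "\<And>i. i \<in> I \<Longrightarrow> \<mu> i \<noteq> 0 \<Longrightarrow> f i \<in> S"
  shows "(\<Sum>i\<in>I. \<mu> i *\<^sub>R f i) \<in> convex hull S"
proof -
  let ?J = "{i\<in>I. \<mu> i \<noteq> 0}"
  have "(\<Sum>i\<in>I. \<mu> i *\<^sub>R f i) = (\<Sum>i\<in>?J. \<mu> i *\<^sub>R f i)"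
    by (rule sum.mono_neutral_right) (use assms in auto)
  moreover have "sum \<mu> ?J = 1"
    using assms(3) by (subst sum.mono_neutral_left[of I]) (use assms in auto)
  then have "(\<Sum>i\<in>?J. \<mu> i *\<^sub>R f i) \<in> convex hull S"
    by (intro convex_sum) (use assms in \<open>auto intro: hull_inc\<close>)
  ultimately show ?thesis by simp
qed

lemma affine_independent_indexed_coeffs_zero:
  fixes f :: "'i \<Rightarrow> 'a::real_vector"
  assumes "finite I" "inj_on f I" "\<not> affine_dependent (f ` I)"
    and "sum u I = 0" "(\<Sum>i\<in>I. u i *\<^sub>R f i) = 0" "i \<in> I"
  shows "u i = 0"
proof (rule ccontr)
  assume ne: "u i \<noteq> 0"
  define U where "U v = u (the_inv_into I f v)" for v
  have U: "U (f j) = u j" if "j \<in> I" for j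
    using that assms(2) by (simp add: U_def the_inv_into_f_f)
  have "sum U (f ` I) = 0"
    using assms(4) by (simp add: sum.reindex[OF assms(2)] U cong: sum.cong)
  moreover have "(\<Sum>v\<in>f ` I. U v *\<^sub>R v) = 0"
    using assms(5) by (simp add: sum.reindex[OF assms(2)] U cong: sum.cong)
  moreover have "\<exists>v\<in>f ` I. U v \<noteq> 0"
    using ne assms(6) U by force
  ultimately have "affine_dependent (f ` I)"
    using affine_dependent_explicit_finite[of "f ` I"] assms(1) by auto
  then show False using assms(3) by simp
qed

lemma affine_independent_indexedI:
  fixes f :: "'i \<Rightarrow> 'a::real_vector"
  assumes "finite I" "inj_on f I"
    and "\<And>u. sum u I = 0 \<Longrightarrow> (\<Sum>i\<in>I. u i *\<^sub>R f i) = 0 \<Longrightarrow> \<forall>i\<in>I. u i = 0"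
  shows "\<not> affine_dependent (f ` I)"
proof
  assume "affine_dependent (f ` I)"
  then obtain U where U: "sum U (f ` I) = 0" "\<exists>v\<in>f ` I. U v \<noteq> 0" "(\<Sum>v\<in>f ` I. U v *\<^sub>R v) = 0"
    using affine_dependent_explicit_finite[of "f ` I"] assms(1) by auto
  have "sum (U \<circ> f) I = 0" "(\<Sum>i\<in>I. (U \<circ> f) i *\<^sub>R f i) = 0"
    using U sum.reindex[OF assms(2), of U] sum.reindex[OF assms(2), of "\<lambda>v. U v *\<^sub>R v"]
    by (auto simp: o_def)
  then have "\<forall>i\<in>I. (U \<circ> f) i = 0" by (rule assms(3))
  then show False using U(2) by auto
qed

lemma affine_independent_indexed_coeffs_unique:
  fixes f :: "'i \<Rightarrow> 'a::real_vector"
  assumes "finite I" "inj_on f I" "\<not> affine_dependent (f ` I)"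
    and "sum u I = sum w I" "(\<Sum>i\<in>I. u i *\<^sub>R f i) = (\<Sum>i\<in>I. w i *\<^sub>R f i)" "i \<in> I"
  shows "u i = w i"
  using affine_independent_indexed_coeffs_zero[OF assms(1-3), of "\<lambda>i. u i - w i"] assms(4-6)
  by (simp add: sum_subtractf scaleR_diff_left)

lemma sum_if_mem_image:
  fixes g :: "'a \<Rightarrow> 'b::comm_monoid_add"
  assumes "finite I" "inj_on a I" "S \<subseteq> a ` I"
  shows "(\<Sum>c\<in>I. if a c \<in> S then g (a c) else 0) = (\<Sum>v\<in>S. g v)"
proof -
  have "(\<Sum>c\<in>I. if a c \<in> S then g (a c) else 0) = (\<Sum>c\<in>{c\<in>I. a c \<in> S}. g (a c))"
    using assms(1) by (simp add: sum.inter_filter)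
  also have "\<dots> = (\<Sum>v\<in>a ` {c\<in>I. a c \<in> S}. g v)"
    using inj_on_subset[OF assms(2)] by (subst sum.reindex) auto
  also have "a ` {c\<in>I. a c \<in> S} = S"
    using assms(3) by auto
  finally show ?thesis .
qed

lemma barycentric_coords_on_face:
  fixes b :: "nat \<Rightarrow> 'v::real_vector"
  assumes "inj_on b {..<n}" "\<not> affine_dependent (b ` {..<n})" "S \<subseteq> b ` {..<n}"
    and "(\<Sum>c<n. lam c) = 1" "sum nu S = 1" "(\<Sum>c<n. lam c *\<^sub>R b c) = (\<Sum>v\<in>S. nu v *\<^sub>R v)"
    and "c < n"
  shows "lam c = (if b c \<in> S then nu (b c) else 0)"
proof (rule affine_independent_indexed_coeffs_unique[of "{..<n}" b])
  show "sum lam {..<n} = (\<Sum>c<n. if b c \<in> S then nu (b c) else 0)"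
    using sum_if_mem_image[of "{..<n}" b S nu] assms by simp
  show "(\<Sum>c<n. lam c *\<^sub>R b c) = (\<Sum>c<n. (if b c \<in> S then nu (b c) else 0) *\<^sub>R b c)"
    using sum_if_mem_image[of "{..<n}" b S "\<lambda>v. nu v *\<^sub>R v"] assms
    by (simp add: if_distrib[of "\<lambda>x. x *\<^sub>R _"] cong: if_cong)
qed (use assms in auto)

lemma barycentric_coords_common_face:
  fixes a a' :: "nat \<Rightarrow> 'v::real_vector"
  assumes inj: "inj_on a {..<n}" "inj_on a' {..<n}"
    and ind: "\<not> affine_dependent (a ` {..<n})" "\<not> affine_dependent (a' ` {..<n})"
    and same_index: "\<forall>c<n. \<forall>c'<n. a c = a' c' \<longrightarrow> c = c'"
    and sum1: "(\<Sum>c<n. lam c) = 1" "(\<Sum>c<n. lam' c) = 1"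
    and y: "y = (\<Sum>c<n. lam c *\<^sub>R a c)" "y = (\<Sum>c<n. lam' c *\<^sub>R a' c)"
    and y_common: "y \<in> convex hull (a ` {..<n} \<inter> a' ` {..<n})"
  shows "\<forall>c<n. lam c = lam' c \<and> (lam c \<noteq> 0 \<longrightarrow> a c = a' c)"
proof (intro allI impI)
  let ?S = "a ` {..<n} \<inter> a' ` {..<n}"
  obtain nu where nu: "sum nu ?S = 1" "(\<Sum>v\<in>?S. nu v *\<^sub>R v) = y"
    using y_common convex_hull_finite[of ?S] by auto
  fix c assume c: "c < n"
  have lam: "lam c = (if a c \<in> ?S then nu (a c) else 0)"
    by (rule barycentric_coords_on_face[OF inj(1) ind(1) _ sum1(1) nu(1)]) (use y nu c in auto)
  have lam': "lam' c = (if a' c \<in> ?S then nu (a' c) else 0)"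
    by (rule barycentric_coords_on_face[OF inj(2) ind(2) _ sum1(2) nu(1)]) (use y nu c in auto)
  show "lam c = lam' c \<and> (lam c \<noteq> 0 \<longrightarrow> a c = a' c)"
  proof (cases "a c \<in> ?S \<or> a' c \<in> ?S")
    case True
    have "a c = a' c"
    proof (cases "a c \<in> a' ` {..<n}")
      case True
      then obtain c' where c': "c' < n" "a c = a' c'" by auto
      then show ?thesis using same_index[rule_format, OF c c'] by simp
    next
      case False
      with True obtain c' where c': "c' < n" "a c' = a' c" by auto
      then show ?thesis using same_index[rule_format, OF c'(1) c c'(2)] by simp
    qed
    with True show ?thesis
      using lam lam' by simp
  next
    case False
    then have "a c \<notin> ?S" "a' c \<notin> ?S"
      by blast+
    then have "lam c = 0" "lam' c = 0"
      by (simp_all only: lam lam' if_False)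
    then show ?thesis by simp
  qed
qed

section \<open>Windows of consecutive integers\<close>

definition colour :: "nat \<Rightarrow> int \<Rightarrow> nat" where
  "colour n j = nat (j mod int n)"

definition offset :: "nat \<Rightarrow> int \<Rightarrow> nat \<Rightarrow> nat" where
  "offset n z c = nat ((int c - z) mod int n)"

lemma colour_less: "0 < n \<Longrightarrow> colour n j < n"
  by (simp add: colour_def nat_less_iff)

lemma colour_add_period: "colour n (j + int n) = colour n j"
  by (simp add: colour_def)

lemma offset_less: "0 < n \<Longrightarrow> offset n z c < n"
  by (simp add: offset_def nat_less_iff)

lemma colour_offset: "c < n \<Longrightarrow> colour n (z + int (offset n z c)) = c"
proof -
  assume c: "c < n"
  have "(z + (int c - z) mod int n) mod int n = int c mod int n"
    by (metis add.commute diff_add_cancel mod_add_right_eq)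
  then show ?thesis
    using c by (simp add: colour_def offset_def)
qed

lemma offset_colour: "k < n \<Longrightarrow> offset n z (colour n (z + int k)) = k"
proof -
  assume k: "k < n"
  have "int (colour n (z + int k)) = (z + int k) mod int n"
    using k by (simp add: colour_def)
  moreover have "((z + int k) mod int n - z) mod int n = int k mod int n"
    by (simp add: mod_diff_left_eq)
  ultimately show ?thesis
    using k by (simp add: offset_def)
qed

lemma colour_eq_iff: "k < n \<Longrightarrow> k' < n \<Longrightarrow> colour n (z + int k) = colour n (z + int k') \<longleftrightarrow> k = k'"
  by (metis offset_colour)

lemma colour_window_image: "0 < n \<Longrightarrow> (\<lambda>k. colour n (z + int k)) ` {..<n} = {..<n}"
  using colour_less[of n] colour_offset[of _ n z] offset_less[of n z]
  by (auto simp: image_iff) (metis lessThan_iff)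

lemma offset_image: "0 < n \<Longrightarrow> offset n z ` {..<n} = {..<n}"
proof
  assume n: "0 < n"
  show "offset n z ` {..<n} \<subseteq> {..<n}"
    using offset_less[OF n] by auto
  show "{..<n} \<subseteq> offset n z ` {..<n}"
  proof
    fix k assume "k \<in> {..<n}"
    then show "k \<in> offset n z ` {..<n}"
      using offset_colour[of k n z] colour_less[OF n] by (metis image_eqI lessThan_iff)
  qed
qed

lemma sum_window:
  fixes g :: "nat \<Rightarrow> 'a::comm_monoid_add"
  assumes "0 < n"
  shows "(\<Sum>k<n. g (colour n (z + int k))) = (\<Sum>c<n. g c)"
  by (rule sum.reindex_bij_witness[of _ "offset n z" "\<lambda>k. colour n (z + int k)"])
     (use assms in \<open>auto simp: colour_offset offset_colour offset_less colour_less\<close>)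

text \<open>Weights \<open>w\<close> on the \<open>n + 1\<close> positions of a closed window, collected by colour: the
  first and the last position share the colour of \<open>z\<close>.\<close>

definition colour_weight :: "nat \<Rightarrow> int \<Rightarrow> (nat \<Rightarrow> real) \<Rightarrow> nat \<Rightarrow> real" where
  "colour_weight n z w c = w (offset n z c) + (if c = colour n z then w n else 0)"

lemma sum_colour_weight_scaleR:
  fixes g :: "nat \<Rightarrow> 'a::real_vector"
  assumes "0 < n"
  shows "(\<Sum>k\<le>n. w k *\<^sub>R g (colour n (z + int k))) = (\<Sum>c<n. colour_weight n z w c *\<^sub>R g c)"
proof -
  have "(\<Sum>k\<le>n. w k *\<^sub>R g (colour n (z + int k)))
      = (\<Sum>k<n. w k *\<^sub>R g (colour n (z + int k))) + w n *\<^sub>R g (colour n z)"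
    by (simp add: lessThan_Suc_atMost[symmetric] colour_add_period add.commute)
  also have "(\<Sum>k<n. w k *\<^sub>R g (colour n (z + int k))) = (\<Sum>c<n. w (offset n z c) *\<^sub>R g c)"
    by (rule sum.reindex_bij_witness[of _ "offset n z" "\<lambda>k. colour n (z + int k)"])
       (use assms in \<open>auto simp: colour_offset offset_colour offset_less colour_less\<close>)
  also have "w n *\<^sub>R g (colour n z) = (\<Sum>c<n. (if c = colour n z then w n else 0) *\<^sub>R g c)"
    using colour_less[OF assms, of z]
    by (simp add: if_distrib[of "\<lambda>x. x *\<^sub>R _"] sum.delta cong: if_cong)
  finally show ?thesis
    by (simp add: colour_weight_def scaleR_add_left sum.distrib)
qed

lemma sum_colour_weight: "0 < n \<Longrightarrow> (\<Sum>k\<le>n. w k) = (\<Sum>c<n. colour_weight n z w c)"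
  using sum_colour_weight_scaleR[of n w "\<lambda>_. 1::real" z] by simp

lemma colour_weight_window:
  "k < n \<Longrightarrow> colour_weight n z w (colour n (z + int k)) = w k + (if k = 0 then w n else 0)"
  using colour_eq_iff[of k n 0 z] by (auto simp: colour_weight_def offset_colour)

text \<open>For barycentric weights \<open>lam\<close> on the colours, \<open>window_floor n lam z\<close> is the
  \<open>lam\<close>-average of the positions in the window starting at \<open>z\<close>.  The point over \<open>lam\<close> at
  height \<open>s\<close> lies in that window exactly when \<open>s\<close> is between the values at \<open>z\<close> and \<open>z + 1\<close>.\<close>

definition window_floor :: "nat \<Rightarrow> (nat \<Rightarrow> real) \<Rightarrow> int \<Rightarrow> real" where
  "window_floor n lam z = (\<Sum>k<n. lam (colour n (z + int k)) * of_int (z + int k))"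

lemma window_floor_cong:
  "0 < n \<Longrightarrow> (\<forall>c<n. lam c = lam' c) \<Longrightarrow> window_floor n lam z = window_floor n lam' z"
  unfolding window_floor_def by (rule sum.cong) (auto simp: colour_less)

lemma window_floor_Suc:
  "window_floor n lam (z + 1) = window_floor n lam z + real n * lam (colour n z)"
proof -
  let ?f = "\<lambda>k::nat. lam (colour n (z + int k)) * of_int (z + int k)"
  have "(\<Sum>k<Suc n. ?f k) = ?f 0 + (\<Sum>k<n. ?f (Suc k))"
    by (rule sum.lessThan_Suc_shift)
  moreover have "(\<Sum>k<n. ?f (Suc k)) = window_floor n lam (z + 1)"
    unfolding window_floor_def by (rule sum.cong) (auto simp: add_ac)
  moreover have "?f n = lam (colour n z) * of_int (z + int n)"
    by (simp add: colour_add_period)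
  ultimately show ?thesis
    unfolding window_floor_def by (simp add: algebra_simps)
qed

lemma window_floor_mono:
  assumes "\<forall>c. 0 \<le> lam c" "z \<le> z'"
  shows "window_floor n lam z \<le> window_floor n lam z'"
proof -
  have "window_floor n lam z \<le> window_floor n lam (z + int d)" for d
  proof (induction d)
    case (Suc d)
    have "window_floor n lam (z + int (Suc d))
        = window_floor n lam (z + int d) + real n * lam (colour n (z + int d))"
      using window_floor_Suc[of n lam "z + int d"] by (simp add: ac_simps)
    with Suc.IH assms(1) show ?case
      by (smt (verit) mult_nonneg_nonneg of_nat_0_le_iff)
  qed simp
  from this[of "nat (z' - z)"] show ?thesis
    using assms(2) by simp
qed

lemma window_floor_bounds:
  assumes "\<forall>c. 0 \<le> lam c" "(\<Sum>c<n. lam c) = 1" "0 < n"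
  shows "of_int z \<le> window_floor n lam z" "window_floor n lam z \<le> of_int z + real n"
proof -
  have "(\<Sum>k<n. lam (colour n (z + int k))) = 1"
    using sum_window[OF assms(3), of lam z] assms(2) by simp
  moreover have "(\<Sum>k<n. lam (colour n (z + int k)) * of_int z) \<le> window_floor n lam z"
    "window_floor n lam z \<le> (\<Sum>k<n. lam (colour n (z + int k)) * (of_int z + real n))"
    unfolding window_floor_def by (rule sum_mono; use assms in \<open>auto intro: mult_left_mono\<close>)+
  ultimately show "of_int z \<le> window_floor n lam z" "window_floor n lam z \<le> of_int z + real n"
    by (simp_all add: sum_distrib_right[symmetric])
qed

lemma ex_window_floor_between:
  assumes "\<forall>c. 0 \<le> lam c" "(\<Sum>c<n. lam c) = 1" "0 < n"
  shows "\<exists>z. window_floor n lam z \<le> s \<and> s \<le> window_floor n lam (z + 1)"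
proof -
  define z0 where "z0 = \<lfloor>s\<rfloor> - int n"
  have "of_int z0 + real n \<le> s"
    using of_int_floor_le[of s] by (simp add: z0_def)
  then have "window_floor n lam z0 \<le> s"
    using window_floor_bounds(2)[OF assms, of z0] by linarith
  moreover have "s < of_int (z0 + int (n + 1))"
    using real_of_int_floor_add_one_gt[of s] by (simp add: z0_def)
  then have "s < window_floor n lam (z0 + int (n + 1))"
    using window_floor_bounds(1)[OF assms, of "z0 + int (n + 1)"] by linarith
  ultimately obtain k where "window_floor n lam (z0 + int k) \<le> s" "s < window_floor n lam (z0 + int (Suc k))"
    using ex_least_nat_less[of "\<lambda>k. s < window_floor n lam (z0 + int k)" "n + 1"] by (auto simp: not_less)
  then show ?thesis
    by (intro exI[of _ "z0 + int k"]) (auto simp: add_ac)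
qed

text \<open>The barycentric weights, on the positions \<open>0..n\<close> of the window at \<open>z\<close>, of the point over
  \<open>lam\<close> at height \<open>s\<close>; the excess of \<open>window_floor n lam (z + 1)\<close> over \<open>s\<close> is moved from the
  last position to the first.\<close>

definition window_coeff :: "nat \<Rightarrow> (nat \<Rightarrow> real) \<Rightarrow> real \<Rightarrow> int \<Rightarrow> nat \<Rightarrow> real" where
  "window_coeff n lam s z k =
     (if k = 0 then (window_floor n lam (z + 1) - s) / real n
      else if k = n then lam (colour n z) - (window_floor n lam (z + 1) - s) / real n
      else lam (colour n (z + int k)))"

lemma sum_window_coeff:
  fixes g :: "int \<Rightarrow> 'a::real_vector"
  assumes n: "0 < n"
  shows "(\<Sum>k\<le>n. window_coeff n lam s z k *\<^sub>R g (z + int k)) =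
    (\<Sum>k<n. lam (colour n (z + 1 + int k)) *\<^sub>R g (z + 1 + int k))
      - ((window_floor n lam (z + 1) - s) / real n) *\<^sub>R (g (z + int n) - g z)"
proof -
  let ?t = "(window_floor n lam (z + 1) - s) / real n"
  let ?f = "\<lambda>k. window_coeff n lam s z k *\<^sub>R g (z + int k)"
  obtain m where m: "n = Suc m"
    using n by (cases n) auto
  have last: "?f n = lam (colour n (z + 1 + int m)) *\<^sub>R g (z + 1 + int m) - ?t *\<^sub>R g (z + int n)"
    using colour_add_period[of n z] by (simp add: m window_coeff_def scaleR_diff_left add_ac)
  have "(\<Sum>k\<le>n. ?f k) = ?f 0 + (\<Sum>k<n. ?f (Suc k))"
    by (simp add: lessThan_Suc_atMost[symmetric] sum.lessThan_Suc_shift del: sum.lessThan_Suc)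
  also have "(\<Sum>k<n. ?f (Suc k)) = (\<Sum>k<m. ?f (Suc k)) + ?f n"
    by (simp add: m)
  also have "(\<Sum>k<m. ?f (Suc k)) = (\<Sum>k<m. lam (colour n (z + 1 + int k)) *\<^sub>R g (z + 1 + int k))"
    by (rule sum.cong) (auto simp: m window_coeff_def add_ac)
  also have "?f 0 = ?t *\<^sub>R g z"
    by (simp add: window_coeff_def)
  finally have "(\<Sum>k\<le>n. ?f k) = ?t *\<^sub>R g z
      + ((\<Sum>k<m. lam (colour n (z + 1 + int k)) *\<^sub>R g (z + 1 + int k))
         + (lam (colour n (z + 1 + int m)) *\<^sub>R g (z + 1 + int m) - ?t *\<^sub>R g (z + int n)))"
    unfolding last .
  moreover have "(\<Sum>k<n. lam (colour n (z + 1 + int k)) *\<^sub>R g (z + 1 + int k))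
      = (\<Sum>k<m. lam (colour n (z + 1 + int k)) *\<^sub>R g (z + 1 + int k))
        + lam (colour n (z + 1 + int m)) *\<^sub>R g (z + 1 + int m)"
    by (simp add: m)
  ultimately show ?thesis
    by (simp add: scaleR_diff_right algebra_simps)
qed

lemma window_coeff_barycentric:
  assumes n: "0 < n" and lam: "\<forall>c. 0 \<le> lam c" "(\<Sum>c<n. lam c) = 1"
    and s: "window_floor n lam z \<le> s" "s \<le> window_floor n lam (z + 1)"
  shows "\<forall>k\<le>n. 0 \<le> window_coeff n lam s z k \<and> window_coeff n lam s z k \<le> lam (colour n (z + int k))"
    and "(\<Sum>k\<le>n. window_coeff n lam s z k) = 1"
    and "(\<Sum>k\<le>n. window_coeff n lam s z k * of_int (z + int k)) = s"
    and "\<And>g :: nat \<Rightarrow> 'a::real_vector.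
           (\<Sum>k\<le>n. window_coeff n lam s z k *\<^sub>R g (colour n (z + int k))) = (\<Sum>c<n. lam c *\<^sub>R g c)"
proof -
  let ?t = "(window_floor n lam (z + 1) - s) / real n"
  have "0 \<le> ?t" "?t \<le> lam (colour n z)"
    using s n window_floor_Suc[of n lam z] by (simp_all add: divide_le_eq mult.commute)
  then show "\<forall>k\<le>n. 0 \<le> window_coeff n lam s z k \<and> window_coeff n lam s z k \<le> lam (colour n (z + int k))"
    using lam colour_add_period[of n z] by (auto simp: window_coeff_def)
  have shifted: "(\<Sum>k<n. f (colour n (z + 1 + int k))) = (\<Sum>c<n. f c)" for f :: "nat \<Rightarrow> 'b::comm_monoid_add"
    using sum_window[OF n, of f "z + 1"] by simp
  show "(\<Sum>k\<le>n. window_coeff n lam s z k) = 1"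
    using sum_window_coeff[OF n, of lam s z "\<lambda>_. 1::real"] shifted[of lam] lam by simp
  have "(\<Sum>k<n. lam (colour n (z + 1 + int k)) * of_int (z + 1 + int k)) = window_floor n lam (z + 1)"
    by (simp add: window_floor_def add_ac)
  then show "(\<Sum>k\<le>n. window_coeff n lam s z k * of_int (z + int k)) = s"
    using sum_window_coeff[OF n, of lam s z "\<lambda>j. of_int j :: real"] n by simp
  show "(\<Sum>k\<le>n. window_coeff n lam s z k *\<^sub>R g (colour n (z + int k))) = (\<Sum>c<n. lam c *\<^sub>R g c)"
    for g :: "nat \<Rightarrow> 'a"
    using sum_window_coeff[OF n, of lam s z "\<lambda>j. g (colour n j)"] shifted[of "\<lambda>c. lam c *\<^sub>R g c"]
      colour_add_period[of n z]
    by (simp add: add_ac)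
qed

text \<open>Weights at positions before \<open>z'\<close> would force \<open>window_floor\<close> to be constant on a stretch
  where one of them is a positive \<open>lam\<close>-value.\<close>

lemma window_coeff_nonzero_imp_ge:
  assumes n: "0 < n" and lam: "\<forall>c. 0 \<le> lam c" "(\<Sum>c<n. lam c) = 1"
    and s: "window_floor n lam z \<le> s" "s \<le> window_floor n lam (z + 1)"
    and s': "window_floor n lam z' \<le> s"
    and k: "k \<le> n" "window_coeff n lam s z k \<noteq> 0"
  shows "z' \<le> z + int k"
proof (rule ccontr)
  assume "\<not> z' \<le> z + int k"
  then have lt: "z + int k + 1 \<le> z'"
    by simp
  have weight: "lam (colour n (z + int k)) \<noteq> 0"
    using window_coeff_barycentric(1)[OF n lam s] k by force
  have "window_floor n lam (z + 1) \<le> window_floor n lam z'"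
    using window_floor_mono[OF lam(1)] lt by simp
  then have s_eq: "s = window_floor n lam (z + 1)" "window_floor n lam z' = s"
    using s s' by linarith+
  have "k \<noteq> 0"
  proof
    assume "k = 0"
    with k(2) s_eq(1) show False
      by (simp add: window_coeff_def)
  qed
  then have "window_floor n lam (z + 1) \<le> window_floor n lam (z + int k)"
    "window_floor n lam (z + int k + 1) \<le> window_floor n lam z'"
    using window_floor_mono[OF lam(1)] lt by simp_all
  then have "real n * lam (colour n (z + int k)) \<le> 0"
    using window_floor_Suc[of n lam "z + int k"] s_eq by linarith
  then show False
    using weight lam(1) n by (simp add: mult_le_0_iff order.antisym)
qed

section \<open>Columns of simplices over a base simplex\<close>

text \<open>\<open>lift l q a j\<close> is the vertex \<open>B\<^sub>j = (a (j mod (l + 1)), j q)\<close> of the construction,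
  built over a simplex with vertices \<open>a 0, \<dots>, a l\<close> in the first \<open>l\<close> coordinates.\<close>

definition lift :: "nat \<Rightarrow> real \<Rightarrow> (nat \<Rightarrow> (real, 'n::{finite,linorder}) vec) \<Rightarrow> int \<Rightarrow> (real, 'n) vec" where
  "lift l q a j = a (colour (Suc l) j) + (of_int j * q) *\<^sub>R basis_vec l"

definition lift_window :: "nat \<Rightarrow> real \<Rightarrow> (nat \<Rightarrow> (real, 'n::{finite,linorder}) vec) \<Rightarrow> int \<Rightarrow> (real, 'n) vec set" where
  "lift_window l q a z = (\<lambda>k. lift l q a (z + int k)) ` {..Suc l}"

definition base_simplex :: "nat \<Rightarrow> (nat \<Rightarrow> (real, 'n::{finite,linorder}) vec) \<Rightarrow> bool" where
  "base_simplex l a \<longleftrightarrow>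
     (\<forall>c<Suc l. a c \<in> lower_space l) \<and> inj_on a {..<Suc l} \<and> \<not> affine_dependent (a ` {..<Suc l})"

lemma lower_part_lift:
  assumes "base_simplex l a"
  shows "lower_part l (lift l q a j) = a (colour (Suc l) j)"
proof -
  have "a (colour (Suc l) j) \<in> lower_space l"
    using assms colour_less[of "Suc l" j] by (auto simp: base_simplex_def)
  then show ?thesis
    by (simp add: lift_def lower_part_simps lower_part_id lower_part_basis_vec)
qed

lemma coord_lift:
  assumes "base_simplex l a" "l < CARD('n::{finite,linorder})"
  shows "coord l (lift l q (a :: nat \<Rightarrow> (real, 'n) vec) j) = of_int j * q"
proof -
  have "a (colour (Suc l) j) \<in> lower_space l"
    using assms colour_less[of "Suc l" j] by (auto simp: base_simplex_def)
  then show ?thesis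
    using assms(2) by (simp add: lift_def coord_simps coord_lower_space coord_basis_vec)
qed

lemma sum_scaleR_lift:
  "(\<Sum>k\<in>S. w k *\<^sub>R lift l q a (z + int k)) =
    (\<Sum>k\<in>S. w k *\<^sub>R a (colour (Suc l) (z + int k))) + ((\<Sum>k\<in>S. w k * of_int (z + int k)) * q) *\<^sub>R basis_vec l"
  by (simp add: lift_def scaleR_add_right sum.distrib scaleR_sum_left[symmetric] sum_distrib_right mult.assoc)

lemma inj_on_lift:
  assumes "base_simplex l a" "l < CARD('n::{finite,linorder})" "q \<noteq> 0"
  shows "inj_on (\<lambda>k. lift l q (a :: nat \<Rightarrow> (real, 'n) vec) (z + int k)) S"
proof
  fix k k' assume "lift l q a (z + int k) = lift l q a (z + int k')"
  then have "coord l (lift l q a (z + int k)) = coord l (lift l q a (z + int k'))"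
    by simp
  then show "k = k'"
    using coord_lift[OF assms(1,2)] assms(3) by simp
qed

text \<open>An affine relation among the lifted vertices projects to one among the base vertices,
  which forces the coefficients to vanish except at the two ends of the window; the last
  coordinate then kills those as well.\<close>

lemma affine_independent_lift:
  assumes base: "base_simplex l a" and l: "l < CARD('n::{finite,linorder})" and q: "q \<noteq> 0"
  shows "\<not> affine_dependent (lift_window l q (a :: nat \<Rightarrow> (real, 'n) vec) z)"
  unfolding lift_window_def
proof (rule affine_independent_indexedI)
  let ?n = "Suc l"
  show "inj_on (\<lambda>k. lift l q a (z + int k)) {..Suc l}"
    by (rule inj_on_lift[OF assms])
  fix u assume u1: "sum u {..?n} = 0" and u2: "(\<Sum>k\<le>?n. u k *\<^sub>R lift l q a (z + int k)) = 0"
  have "(\<Sum>k\<le>?n. u k *\<^sub>R a (colour ?n (z + int k))) = lower_part l (\<Sum>k\<le>?n. u k *\<^sub>R lift l q a (z + int k))"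
    by (simp add: lower_part_simps lower_part_lift[OF base])
  then have proj: "(\<Sum>k\<le>?n. u k *\<^sub>R a (colour ?n (z + int k))) = 0"
    unfolding u2 by (simp add: lower_part_def vec_eq_iff)
  have "(\<Sum>k\<le>?n. u k * of_int (z + int k)) * q = coord l (\<Sum>k\<le>?n. u k *\<^sub>R lift l q a (z + int k))"
    by (simp add: coord_simps coord_lift[OF base l] sum_distrib_right mult.assoc del: sum.atMost_Suc)
  then have height: "(\<Sum>k\<le>?n. u k * of_int (z + int k)) = 0"
    unfolding u2 using q by (simp add: coord_def)
  have zero: "colour_weight ?n z u c = 0" if "c < ?n" for c
  proof (rule affine_independent_indexed_coeffs_zero[of "{..<?n}" a])
    show "inj_on a {..<?n}" "\<not> affine_dependent (a ` {..<?n})"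
      using base by (auto simp: base_simplex_def)
    show "sum (colour_weight ?n z u) {..<?n} = 0"
      using sum_colour_weight[of ?n u z] u1 by simp
    show "(\<Sum>c<?n. colour_weight ?n z u c *\<^sub>R a c) = 0"
      using sum_colour_weight_scaleR[of ?n u a z] proj by simp
  qed (use that in simp_all)
  have inner: "u k = 0" if "0 < k" "k < ?n" for k
    using zero[OF colour_less[of ?n "z + int k"]] colour_weight_window[OF that(2), of z u] that by simp
  have ends: "u 0 + u ?n = 0"
    using zero[OF colour_less[of ?n "z + int 0"]] colour_weight_window[of 0 ?n z u] by simp
  have "(\<Sum>k\<le>?n. u k * of_int (z + int k)) = (\<Sum>k\<in>{0, ?n}. u k * of_int (z + int k))"
    by (rule sum.mono_neutral_right) (use inner in auto)
  then have "u 0 * of_int z + u ?n * (of_int z + real ?n) = 0"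
    using height by simp
  moreover have "u 0 = - u ?n"
    using ends by linarith
  ultimately have "u ?n * real ?n = 0"
    by (simp add: ring_distribs)
  then have "u ?n = 0"
    by simp
  show "\<forall>k\<in>{..?n}. u k = 0"
  proof
    fix k assume "k \<in> {..?n}"
    then show "u k = 0"
      using inner[of k] \<open>u ?n = 0\<close> ends by (cases "k = 0"; cases "k = ?n") auto
  qed
qed simp

lemma mem_lift_window_hull:
  assumes base: "base_simplex l a" and l: "l < CARD('n::{finite,linorder})" and q: "q \<noteq> 0"
    and x: "x \<in> convex hull (lift_window l q (a :: nat \<Rightarrow> (real, 'n) vec) z)"
  obtains lam where "\<forall>c. 0 \<le> lam c" "(\<Sum>c<Suc l. lam c) = 1"
    "lower_part l x = (\<Sum>c<Suc l. lam c *\<^sub>R a c)"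
    "window_floor (Suc l) lam z \<le> coord l x / q" "coord l x / q \<le> window_floor (Suc l) lam (z + 1)"
proof -
  let ?n = "Suc l"
  obtain w where w: "\<forall>k\<in>{..?n}. 0 \<le> w k" "sum w {..?n} = 1"
    "(\<Sum>k\<le>?n. w k *\<^sub>R lift l q a (z + int k)) = x"
    using x convex_hull_finite_indexed[of "{..?n}" "\<lambda>k. lift l q a (z + int k)"] inj_on_lift[OF assms(1-3)]
    by (auto simp: lift_window_def)
  define lam where "lam = colour_weight ?n z w"
  define s where "s = (\<Sum>k\<le>?n. w k * of_int (z + int k))"
  have "\<forall>c. 0 \<le> w (offset ?n z c)"
    using w(1) offset_less[of ?n z] by (metis atMost_iff less_imp_le_nat zero_less_Suc)
  then have lam_nonneg: "\<forall>c. 0 \<le> lam c"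
    using w(1) by (auto simp: lam_def colour_weight_def)
  have lam_sum: "(\<Sum>c<?n. lam c) = 1"
    using sum_colour_weight[of ?n w z] w(2) by (simp add: lam_def)
  have "lower_part l x = (\<Sum>k\<le>?n. w k *\<^sub>R a (colour ?n (z + int k)))"
    unfolding w(3)[symmetric] by (simp add: lower_part_simps lower_part_lift[OF base])
  also have "\<dots> = (\<Sum>c<?n. lam c *\<^sub>R a c)"
    unfolding lam_def by (rule sum_colour_weight_scaleR) simp
  finally have proj: "lower_part l x = (\<Sum>c<?n. lam c *\<^sub>R a c)" .
  have "coord l x = s * q"
    unfolding w(3)[symmetric] s_def by (simp add: coord_simps coord_lift[OF base l] sum_distrib_right mult.assoc del: sum.atMost_Suc)
  then have height: "coord l x / q = s"
    using q by simp
  have "window_floor ?n lam z = (\<Sum>k<?n. (w k + (if k = 0 then w ?n else 0)) * of_int (z + int k))"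
    unfolding window_floor_def lam_def by (rule sum.cong) (auto simp: colour_weight_window)
  also have "\<dots> = (\<Sum>k<?n. w k * of_int (z + int k)) + w ?n * of_int z"
    by (simp add: distrib_right sum.distrib if_distrib[of "\<lambda>x. x * _"] sum.delta cong: if_cong)
  also have "\<dots> = s - real ?n * w ?n"
    by (simp add: s_def lessThan_Suc_atMost[symmetric] algebra_simps)
  finally have floor_z: "window_floor ?n lam z = s - real ?n * w ?n" .
  have floor_Suc: "window_floor ?n lam (z + 1) = s + real ?n * w 0"
    using window_floor_Suc[of ?n lam z] floor_z colour_weight_window[of 0 ?n z w]
    by (simp add: lam_def algebra_simps)
  have "0 \<le> w ?n" "0 \<le> w 0"
    using w(1) by auto
  then show ?thesis
    using that[OF lam_nonneg lam_sum proj] floor_z floor_Suc height by simp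
qed

text \<open>Since \<open>window_floor\<close> is nondecreasing, only positions from \<open>z'\<close> on carry positive
  weight in the window at \<open>z\<close>.\<close>

lemma lift_point_in_common_hull:
  assumes lam: "\<forall>c. 0 \<le> lam c" "(\<Sum>c<Suc l. lam c) = 1"
    and agree: "\<forall>c<Suc l. lam c \<noteq> 0 \<longrightarrow> a c = a' c"
    and "z \<le> z'"
    and s: "window_floor (Suc l) lam z \<le> s" "s \<le> window_floor (Suc l) lam (z + 1)"
    and s': "window_floor (Suc l) lam z' \<le> s" "s \<le> window_floor (Suc l) lam (z' + 1)"
  shows "(\<Sum>c<Suc l. lam c *\<^sub>R a c) + (s * q) *\<^sub>R basis_vec l
     \<in> convex hull (lift_window l q a z \<inter> lift_window l q a' z')"
proof -
  let ?n = "Suc l"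
  let ?m = "window_coeff ?n lam s z"
  note coeff = window_coeff_barycentric[of ?n lam z s, OF _ lam s]
  have "(\<Sum>k\<le>?n. ?m k *\<^sub>R lift l q a (z + int k)) = (\<Sum>c<?n. lam c *\<^sub>R a c) + (s * q) *\<^sub>R basis_vec l"
    using coeff(3,4) by (simp add: sum_scaleR_lift)
  moreover have "(\<Sum>k\<le>?n. ?m k *\<^sub>R lift l q a (z + int k)) \<in> convex hull (lift_window l q a z \<inter> lift_window l q a' z')"
  proof (rule convex_sum_in_hull_of_support)
    show "\<forall>k\<in>{..?n}. 0 \<le> ?m k" "sum ?m {..?n} = 1"
      using coeff(1,2) by auto
    fix k assume k: "k \<in> {..?n}" and mk: "?m k \<noteq> 0"
    have weight: "lam (colour ?n (z + int k)) \<noteq> 0"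
      using coeff(1) k mk by force
    have ge: "z' \<le> z + int k"
      using window_coeff_nonzero_imp_ge[OF _ lam s s'(1)] k mk by simp
    have "a (colour ?n (z + int k)) = a' (colour ?n (z + int k))"
      using agree weight colour_less[of ?n "z + int k"] by auto
    then have "lift l q a (z + int k) = lift l q a' (z' + int (nat (z + int k - z')))"
      using ge by (simp add: lift_def)
    moreover have "nat (z + int k - z') \<in> {..?n}"
      using \<open>z \<le> z'\<close> k by simp
    ultimately have "lift l q a (z + int k) \<in> lift_window l q a' z'"
      unfolding lift_window_def by (rule image_eqI)
    moreover have "lift l q a (z + int k) \<in> lift_window l q a z"
      using k unfolding lift_window_def by (rule imageI)
    ultimately show "lift l q a (z + int k) \<in> lift_window l q a z \<inter> lift_window l q a' z'"
      by blast
  qed simp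
  ultimately show ?thesis
    by simp
qed

section \<open>The vertex lists of the construction\<close>

text \<open>Step \<open>m - 1 \<rightarrow> m\<close> of the construction, started at the single point of \<open>\<real>\<^sup>0\<close>; in
  \<open>tess_vertices\<close> the step to \<open>m = 1\<close> is unrolled.\<close>

definition next_vertices :: "(nat \<Rightarrow> real) \<Rightarrow> nat \<Rightarrow> real list list \<times> int \<Rightarrow> real list list" where
  "next_vertices p l = (\<lambda>(A, z). map (\<lambda>i. let j = z + ((int i - z) mod int (l + 2))
     in A ! nat (j mod int (l + 1)) @ [of_int j * p (l + 1)]) [0..<l + 2])"

fun vertex_lists :: "(nat \<Rightarrow> real) \<Rightarrow> nat \<Rightarrow> real list list set" where
  "vertex_lists p 0 = {[[]]}"
| "vertex_lists p (Suc l) = next_vertices p l ` (vertex_lists p l \<times> UNIV)"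

lemma tess_vertices_eq_vertex_lists: "tess_vertices p (Suc m) = vertex_lists p (Suc m)"
proof (induction m)
  case 0
  have "(if z mod 2 = 0 then [[of_int z * p 1], [of_int (z + 1) * p 1]]
         else [[of_int (z + 1) * p 1], [of_int z * p 1]]) = next_vertices p 0 ([[]], z)" for z :: int
  proof (cases "z mod 2 = 0")
    case True
    then have "(1 - z) mod 2 = 1" "(- z) mod 2 = 0" by presburger+
    with True show ?thesis by (simp add: next_vertices_def upt_rec mod_diff_left_eq)
  next
    case False
    then have "(- z) mod 2 = 1" "(1 - z) mod 2 = 0" by presburger+
    with False show ?thesis by (simp add: next_vertices_def upt_rec algebra_simps)
  qed
  then show ?case
    by (auto simp: image_iff)
next
  case (Suc m)
  have "next_vertices p (Suc m) = (\<lambda>(A, z::int). map (\<lambda>i. let j = z + ((int i - z) mod int (m + 3))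
      in A ! nat (j mod int (m + 2)) @ [of_int j * p (m + 2)]) [0..<m + 3])"
    by (simp add: next_vertices_def numeral_eq_Suc)
  then show ?case
    by (simp only: tess_vertices.simps vertex_lists.simps Suc.IH)
qed

lemma vertex_lists_SucE:
  assumes "L \<in> vertex_lists p (Suc l)"
  obtains A z where "A \<in> vertex_lists p l" "L = next_vertices p l (A, z)"
  using assms by auto

definition vertex :: "real list list \<Rightarrow> nat \<Rightarrow> (real, 'n::{finite,linorder}) vec" where
  "vertex V c = pad_vec (V ! c)"

definition window_index :: "nat \<Rightarrow> int \<Rightarrow> nat \<Rightarrow> int" where
  "window_index n z c = z + int (offset n z c)"

lemma colour_window_index: "c < n \<Longrightarrow> colour n (window_index n z c) = c"
  by (simp add: window_index_def colour_offset)

lemma length_next_vertices: "length (next_vertices p l (A, z)) = Suc (Suc l)"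
  by (simp add: next_vertices_def)

lemma nth_next_vertices:
  "c < Suc (Suc l) \<Longrightarrow> next_vertices p l (A, z) ! c =
     A ! colour (Suc l) (window_index (Suc (Suc l)) z c) @ [of_int (window_index (Suc (Suc l)) z c) * p (Suc l)]"
  by (simp add: next_vertices_def window_index_def offset_def colour_def Let_def del: upt_Suc)

lemma vertex_next_vertices:
  assumes "length A = Suc l" "\<forall>v\<in>set A. length v = l" "l < CARD('n::{finite,linorder})" "c < Suc (Suc l)"
  shows "(vertex (next_vertices p l (A, z)) c :: (real, 'n) vec)
    = lift l (p (Suc l)) (vertex A) (window_index (Suc (Suc l)) z c)"
proof -
  have "A ! colour (Suc l) (window_index (Suc (Suc l)) z c) \<in> set A"
    using assms(1) colour_less[of "Suc l"] by auto
  then have "length (A ! colour (Suc l) (window_index (Suc (Suc l)) z c)) = l"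
    using assms(2) by blast
  then show ?thesis
    using assms(3,4) by (simp add: vertex_def nth_next_vertices pad_vec_snoc lift_def)
qed

lemma vertex_image_next_vertices:
  assumes "length A = Suc l" "\<forall>v\<in>set A. length v = l" "l < CARD('n::{finite,linorder})"
  shows "(vertex (next_vertices p l (A, z)) ` {..<Suc (Suc l)} :: (real, 'n) vec set)
     = lift_window l (p (Suc l)) (vertex A) z"
proof -
  have "(vertex (next_vertices p l (A, z)) ` {..<Suc (Suc l)} :: (real, 'n) vec set)
     = (\<lambda>k. lift l (p (Suc l)) (vertex A) (z + int k)) ` (offset (Suc (Suc l)) z ` {..<Suc (Suc l)})"
    using vertex_next_vertices[OF assms] by (auto simp: window_index_def image_image)
  also have "offset (Suc (Suc l)) z ` {..<Suc (Suc l)} = {..Suc l}"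
    using offset_image[of "Suc (Suc l)" z] by (simp add: lessThan_Suc_atMost)
  finally show ?thesis
    by (simp add: lift_window_def)
qed

section \<open>Each layer tessellates\<close>

text \<open>The colour of a vertex is its position in the vertex list.\<close>

definition tessellation_layer :: "(nat \<Rightarrow> real) \<Rightarrow> nat \<Rightarrow> 'n::{finite,linorder} itself \<Rightarrow> bool" where
  "tessellation_layer p m T \<longleftrightarrow>
    (\<forall>V\<in>vertex_lists p m. length V = Suc m \<and> (\<forall>v\<in>set V. length v = m)
       \<and> base_simplex m (vertex V :: nat \<Rightarrow> (real, 'n) vec))
  \<and> (\<forall>V\<in>vertex_lists p m. \<forall>V'\<in>vertex_lists p m. \<forall>c<Suc m. \<forall>c'<Suc m.
       (vertex V c :: (real, 'n) vec) = vertex V' c' \<longrightarrow> c = c')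
  \<and> (\<forall>x::(real, 'n) vec. x \<in> lower_space m \<longrightarrow>
       (\<exists>V\<in>vertex_lists p m. x \<in> convex hull (vertex V ` {..<Suc m})))
  \<and> (\<forall>V\<in>vertex_lists p m. \<forall>V'\<in>vertex_lists p m.
       convex hull (vertex V ` {..<Suc m}) \<inter> convex hull (vertex V' ` {..<Suc m})
         \<subseteq> convex hull (vertex V ` {..<Suc m} \<inter> vertex V' ` {..<Suc m} :: (real, 'n) vec set))"

lemma
  assumes "tessellation_layer p m TYPE('n::{finite,linorder})"
  shows tessellation_layer_base: "\<And>V. V \<in> vertex_lists p m \<Longrightarrow>
      length V = Suc m \<and> (\<forall>v\<in>set V. length v = m) \<and> base_simplex m (vertex V :: nat \<Rightarrow> (real, 'n) vec)"
    and tessellation_layer_colour: "\<And>V V' c c'. V \<in> vertex_lists p m \<Longrightarrow> V' \<in> vertex_lists p m \<Longrightarrow>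
      c < Suc m \<Longrightarrow> c' < Suc m \<Longrightarrow> (vertex V c :: (real, 'n) vec) = vertex V' c' \<Longrightarrow> c = c'"
    and tessellation_layer_cover: "\<And>x::(real, 'n) vec. x \<in> lower_space m \<Longrightarrow>
      \<exists>V\<in>vertex_lists p m. x \<in> convex hull (vertex V ` {..<Suc m})"
    and tessellation_layer_meet: "\<And>V V'. V \<in> vertex_lists p m \<Longrightarrow> V' \<in> vertex_lists p m \<Longrightarrow>
      convex hull (vertex V ` {..<Suc m}) \<inter> convex hull (vertex V' ` {..<Suc m})
        \<subseteq> convex hull (vertex V ` {..<Suc m} \<inter> vertex V' ` {..<Suc m} :: (real, 'n) vec set)"
  using assms unfolding tessellation_layer_def by blast+

lemma tessellation_layer_0: "tessellation_layer p 0 TYPE('n::{finite,linorder})"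
proof -
  have origin: "(vertex [[]] 0 :: (real, 'n) vec) = 0"
    by (simp add: vertex_def pad_vec_def vec_eq_iff)
  have "x \<in> lower_space 0 \<Longrightarrow> x = (0::(real, 'n) vec)" for x
    by (simp add: lower_space_def vec_eq_iff)
  moreover have "base_simplex 0 (vertex [[]] :: nat \<Rightarrow> (real, 'n) vec)"
    using origin by (simp add: base_simplex_def lessThan_Suc lower_space_def)
  ultimately show ?thesis
    unfolding tessellation_layer_def using origin by (auto simp: hull_inc)
qed

context
  fixes p :: "nat \<Rightarrow> real" and l :: nat
  assumes layer: "tessellation_layer p l TYPE('n::{finite,linorder})"
    and l: "l < CARD('n)" and q: "p (Suc l) \<noteq> 0"
begin

lemma base_simplex_vertex: "A \<in> vertex_lists p l \<Longrightarrow> base_simplex l (vertex A :: nat \<Rightarrow> (real, 'n) vec)"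
  using tessellation_layer_base[OF layer] by blast

lemma vertex_next_layer:
  "A \<in> vertex_lists p l \<Longrightarrow> c < Suc (Suc l) \<Longrightarrow>
   (vertex (next_vertices p l (A, z)) c :: (real, 'n) vec) = lift l (p (Suc l)) (vertex A) (window_index (Suc (Suc l)) z c)"
  using vertex_next_vertices tessellation_layer_base[OF layer] l by blast

lemma vertex_image_next_layer:
  "A \<in> vertex_lists p l \<Longrightarrow>
   (vertex (next_vertices p l (A, z)) ` {..<Suc (Suc l)} :: (real, 'n) vec set) = lift_window l (p (Suc l)) (vertex A) z"
  using vertex_image_next_vertices tessellation_layer_base[OF layer] l by blast

lemma next_layer_colour:
  assumes "L \<in> vertex_lists p (Suc l)" "L' \<in> vertex_lists p (Suc l)" "c < Suc (Suc l)" "c' < Suc (Suc l)"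
    and "(vertex L c :: (real, 'n) vec) = vertex L' c'"
  shows "c = c'"
proof -
  obtain A z where A: "A \<in> vertex_lists p l" "L = next_vertices p l (A, z)"
    using assms(1) by (rule vertex_lists_SucE)
  obtain A' z' where A': "A' \<in> vertex_lists p l" "L' = next_vertices p l (A', z')"
    using assms(2) by (rule vertex_lists_SucE)
  have "coord l (vertex L c :: (real, 'n) vec) = coord l (vertex L' c' :: (real, 'n) vec)"
    using assms(5) by simp
  then have "window_index (Suc (Suc l)) z c = window_index (Suc (Suc l)) z' c'"
    using A A' assms(3,4) q
    by (simp add: vertex_next_layer coord_lift[OF base_simplex_vertex l])
  then show "c = c'"
    using colour_window_index[OF assms(3), of z] colour_window_index[OF assms(4), of z'] by metis
qed

lemma next_layer_base:
  assumes "L \<in> vertex_lists p (Suc l)"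
  shows "length L = Suc (Suc l) \<and> (\<forall>v\<in>set L. length v = Suc l)
    \<and> base_simplex (Suc l) (vertex L :: nat \<Rightarrow> (real, 'n) vec)"
proof -
  obtain A z where A: "A \<in> vertex_lists p l" "L = next_vertices p l (A, z)"
    using assms by (rule vertex_lists_SucE)
  have IA: "length A = Suc l" "\<forall>v\<in>set A. length v = l" "base_simplex l (vertex A :: nat \<Rightarrow> (real, 'n) vec)"
    using tessellation_layer_base[OF layer A(1)] by auto
  have len: "length L = Suc (Suc l)"
    using A by (simp add: length_next_vertices)
  have lens: "length v = Suc l" if "v \<in> set L" for v
  proof -
    obtain c where c: "c < Suc (Suc l)" "v = L ! c"
      using \<open>v \<in> set L\<close> len by (auto simp: in_set_conv_nth)
    have "A ! colour (Suc l) (window_index (Suc (Suc l)) z c) \<in> set A"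
      using IA colour_less[of "Suc l"] by auto
    then show ?thesis
      using IA c A by (simp add: nth_next_vertices)
  qed
  have "(vertex L c :: (real, 'n) vec) \<in> lower_space (Suc l)" if "c < Suc (Suc l)" for c
  proof -
    let ?j = "window_index (Suc (Suc l)) z c"
    have "(vertex A (colour (Suc l) ?j) :: (real, 'n) vec) \<in> lower_space (Suc l)"
      using IA(3) colour_less[of "Suc l"] lower_space_mono[of l "Suc l"] by (auto simp: base_simplex_def)
    then show ?thesis
      unfolding A(2) vertex_next_layer[OF A(1) that] lift_def
      by (intro subspace_add[OF subspace_lower_space] subspace_scale[OF subspace_lower_space]
          basis_vec_in_lower_space)
  qed
  moreover have "inj_on (vertex L :: nat \<Rightarrow> (real, 'n) vec) {..<Suc (Suc l)}"
    using next_layer_colour[OF assms assms] by (auto simp: inj_on_def)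
  moreover have "\<not> affine_dependent (vertex L ` {..<Suc (Suc l)} :: (real, 'n) vec set)"
    using affine_independent_lift[OF IA(3) l q] A vertex_image_next_layer[OF A(1)] by simp
  ultimately show ?thesis
    using len lens by (auto simp: base_simplex_def)
qed

lemma next_layer_cover:
  assumes x: "(x :: (real, 'n) vec) \<in> lower_space (Suc l)"
  shows "\<exists>L\<in>vertex_lists p (Suc l). x \<in> convex hull (vertex L ` {..<Suc (Suc l)})"
proof -
  let ?q = "p (Suc l)"
  obtain A where A: "A \<in> vertex_lists p l" "lower_part l x \<in> convex hull (vertex A ` {..<Suc l})"
    using tessellation_layer_cover[OF layer, of "lower_part l x"] by (auto simp: lower_part_def lower_space_def)
  have base: "base_simplex l (vertex A :: nat \<Rightarrow> (real, 'n) vec)"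
    by (rule base_simplex_vertex[OF A(1)])
  obtain lam0 where lam0: "\<forall>c\<in>{..<Suc l}. 0 \<le> lam0 c" "sum lam0 {..<Suc l} = 1"
    "(\<Sum>c<Suc l. lam0 c *\<^sub>R vertex A c) = lower_part l x"
    using convex_hull_finite_indexed[OF finite_lessThan, THEN iffD1, OF _ A(2)] base
    unfolding base_simplex_def by blast
  define lam where "lam c = (if c < Suc l then lam0 c else 0)" for c
  have lam: "\<forall>c. 0 \<le> lam c" "(\<Sum>c<Suc l. lam c) = 1" "(\<Sum>c<Suc l. lam c *\<^sub>R vertex A c) = lower_part l x"
    using lam0 by (auto simp: lam_def)
  obtain z where z: "window_floor (Suc l) lam z \<le> coord l x / ?q" "coord l x / ?q \<le> window_floor (Suc l) lam (z + 1)"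
    using ex_window_floor_between[OF lam(1,2)] by blast
  have "lower_part l x + (coord l x / ?q * ?q) *\<^sub>R basis_vec l
      \<in> convex hull (lift_window l ?q (vertex A) z \<inter> lift_window l ?q (vertex A) z)"
    unfolding lam(3)[symmetric] by (rule lift_point_in_common_hull[OF lam(1,2) _ order_refl z z]) simp
  then have "x \<in> convex hull (lift_window l ?q (vertex A) z)"
    using lower_space_decomp[OF l x] q by simp
  then have "x \<in> convex hull (vertex (next_vertices p l (A, z)) ` {..<Suc (Suc l)})"
    unfolding vertex_image_next_layer[OF A(1)] by simp
  then show ?thesis
    using A(1) by auto
qed

lemma convex_hull_lift_window_subset:
  assumes "A \<in> vertex_lists p l"
  shows "convex hull (lift_window l (p (Suc l)) (vertex A) z :: (real, 'n) vec set) \<subseteq> lower_space (Suc l)"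
proof (rule hull_minimal)
  have "base_simplex (Suc l) (vertex (next_vertices p l (A, z)) :: nat \<Rightarrow> (real, 'n) vec)"
    using next_layer_base assms by auto
  then show "(lift_window l (p (Suc l)) (vertex A) z :: (real, 'n) vec set) \<subseteq> lower_space (Suc l)"
    by (auto simp: base_simplex_def vertex_image_next_layer[OF assms, symmetric])
qed (rule subspace_imp_convex[OF subspace_lower_space])

text \<open>Two simplices of the next layer, over \<open>A\<close> and \<open>A'\<close> with windows at \<open>z \<le> z'\<close>: a common
  point projects into the common face of \<open>A\<close> and \<open>A'\<close>, where the barycentric coordinates agree,
  and then lies in the hull of the common vertices by \<open>lift_point_in_common_hull\<close>.\<close>

lemma next_layer_meet_ordered:
  assumes A: "A \<in> vertex_lists p l" and A': "A' \<in> vertex_lists p l" and "z \<le> z'"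
    and x: "(x :: (real, 'n) vec) \<in> convex hull (lift_window l (p (Suc l)) (vertex A) z)"
      "x \<in> convex hull (lift_window l (p (Suc l)) (vertex A') z')"
  shows "x \<in> convex hull (lift_window l (p (Suc l)) (vertex A) z \<inter> lift_window l (p (Suc l)) (vertex A') z')"
proof -
  let ?q = "p (Suc l)"
  note base = base_simplex_vertex[OF A] and base' = base_simplex_vertex[OF A']
  obtain lam where lam: "\<forall>c. 0 \<le> lam c" "(\<Sum>c<Suc l. lam c) = 1"
    "lower_part l x = (\<Sum>c<Suc l. lam c *\<^sub>R vertex A c)"
    "window_floor (Suc l) lam z \<le> coord l x / ?q" "coord l x / ?q \<le> window_floor (Suc l) lam (z + 1)"
    using mem_lift_window_hull[OF base l q x(1)] by blast
  obtain lam' where lam': "\<forall>c. 0 \<le> lam' c" "(\<Sum>c<Suc l. lam' c) = 1"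
    "lower_part l x = (\<Sum>c<Suc l. lam' c *\<^sub>R vertex A' c)"
    "window_floor (Suc l) lam' z' \<le> coord l x / ?q" "coord l x / ?q \<le> window_floor (Suc l) lam' (z' + 1)"
    using mem_lift_window_hull[OF base' l q x(2)] by blast
  have "lower_part l x \<in> convex hull (vertex A ` {..<Suc l})"
    using convex_hull_finite_indexed[of "{..<Suc l}" "vertex A" "lower_part l x"] base lam
    by (auto simp: base_simplex_def)
  moreover have "lower_part l x \<in> convex hull (vertex A' ` {..<Suc l})"
    using convex_hull_finite_indexed[of "{..<Suc l}" "vertex A'" "lower_part l x"] base' lam'
    by (auto simp: base_simplex_def)
  ultimately have "lower_part l x \<in> convex hull (vertex A ` {..<Suc l} \<inter> vertex A' ` {..<Suc l})"
    using tessellation_layer_meet[OF layer A A'] by blast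
  then have agree: "\<forall>c<Suc l. lam c = lam' c \<and> (lam c \<noteq> 0 \<longrightarrow> vertex A c = (vertex A' c :: (real, 'n) vec))"
  proof (rule barycentric_coords_common_face[OF _ _ _ _ _ lam(2) lam'(2) lam(3) lam'(3), rotated -1])
    show "inj_on (vertex A :: nat \<Rightarrow> (real, 'n) vec) {..<Suc l}" "\<not> affine_dependent (vertex A ` {..<Suc l} :: (real, 'n) vec set)"
      "inj_on (vertex A' :: nat \<Rightarrow> (real, 'n) vec) {..<Suc l}" "\<not> affine_dependent (vertex A' ` {..<Suc l} :: (real, 'n) vec set)"
      using base base' by (simp_all add: base_simplex_def)
    show "\<forall>c<Suc l. \<forall>c'<Suc l. (vertex A c :: (real, 'n) vec) = vertex A' c' \<longrightarrow> c = c'"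
      using tessellation_layer_colour[OF layer A A'] by blast
  qed
  have floors: "window_floor (Suc l) lam' z' = window_floor (Suc l) lam z'"
    "window_floor (Suc l) lam' (z' + 1) = window_floor (Suc l) lam (z' + 1)"
    using window_floor_cong[of "Suc l" lam' lam] agree by auto
  have "lower_part l x + (coord l x / ?q * ?q) *\<^sub>R basis_vec l
      \<in> convex hull (lift_window l ?q (vertex A) z \<inter> lift_window l ?q (vertex A') z' :: (real, 'n) vec set)"
    unfolding lam(3)
  proof (rule lift_point_in_common_hull[OF lam(1,2) _ \<open>z \<le> z'\<close> lam(4,5)])
    show "\<forall>c<Suc l. lam c \<noteq> 0 \<longrightarrow> vertex A c = (vertex A' c :: (real, 'n) vec)"
      using agree by blast
    show "window_floor (Suc l) lam z' \<le> coord l x / ?q" "coord l x / ?q \<le> window_floor (Suc l) lam (z' + 1)"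
      using lam'(4,5) floors by simp_all
  qed
  moreover have "x \<in> lower_space (Suc l)"
    using x(1) convex_hull_lift_window_subset[OF A] by blast
  ultimately show ?thesis
    using q lower_space_decomp[OF l] by simp
qed

lemma next_layer_meet:
  assumes "L \<in> vertex_lists p (Suc l)" "L' \<in> vertex_lists p (Suc l)"
  shows "convex hull (vertex L ` {..<Suc (Suc l)}) \<inter> convex hull (vertex L' ` {..<Suc (Suc l)})
    \<subseteq> convex hull (vertex L ` {..<Suc (Suc l)} \<inter> vertex L' ` {..<Suc (Suc l)} :: (real, 'n) vec set)"
proof
  fix x :: "(real, 'n) vec"
  assume x: "x \<in> convex hull (vertex L ` {..<Suc (Suc l)}) \<inter> convex hull (vertex L' ` {..<Suc (Suc l)})"
  obtain A z where A: "A \<in> vertex_lists p l" "L = next_vertices p l (A, z)"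
    using assms(1) by (rule vertex_lists_SucE)
  obtain A' z' where A': "A' \<in> vertex_lists p l" "L' = next_vertices p l (A', z')"
    using assms(2) by (rule vertex_lists_SucE)
  show "x \<in> convex hull (vertex L ` {..<Suc (Suc l)} \<inter> vertex L' ` {..<Suc (Suc l)})"
    using x next_layer_meet_ordered[OF A(1) A'(1), of z z' x] next_layer_meet_ordered[OF A'(1) A(1), of z' z x]
    unfolding A(2) A'(2) vertex_image_next_layer[OF A(1)] vertex_image_next_layer[OF A'(1)]
    by (cases "z \<le> z'") (auto simp: Int_commute)
qed

lemma tessellation_layer_Suc: "tessellation_layer p (Suc l) TYPE('n)"
  unfolding tessellation_layer_def
  using next_layer_base next_layer_colour next_layer_cover next_layer_meet by blast

end

lemma tessellation_layer_le_card:
  "m \<le> CARD('n::{finite,linorder}) \<Longrightarrow> \<forall>i\<in>{1..m}. p i \<noteq> 0 \<Longrightarrow> tessellation_layer p m TYPE('n)"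
proof (induction m)
  case 0
  show ?case by (rule tessellation_layer_0)
next
  case (Suc l)
  then have "tessellation_layer p l TYPE('n)" "l < CARD('n)" "p (Suc l) \<noteq> 0"
    by auto
  then show ?case
    by (rule tessellation_layer_Suc)
qed

section \<open>The tessellation of \<open>\<real>\<^sup>d\<close>\<close>

lemma convex_hull_Int_face_of:
  fixes S T :: "'a::euclidean_space set"
  assumes "\<not> affine_dependent S" "convex hull S \<inter> convex hull T \<subseteq> convex hull (S \<inter> T)"
  shows "convex hull S \<inter> convex hull T face_of convex hull S"
proof -
  have "convex hull S \<inter> convex hull T = convex hull (S \<inter> T)"
    using assms(2) hull_mono[of "S \<inter> T" S] hull_mono[of "S \<inter> T" T] by blast
  then show ?thesis
    using face_of_convex_hull_affine_independent[OF assms(1)] by blast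
qed

lemma set_map_vec_of_list:
  assumes "length V = Suc CARD('d::{finite,linorder})" "\<forall>v\<in>set V. length v = CARD('d)"
  shows "set (map vec_of_list V) = (vertex V ` {..<Suc CARD('d)} :: (real, 'd) vec set)"
proof -
  have "set V = (\<lambda>c. V ! c) ` {..<Suc CARD('d)}"
    using assms(1) by (auto simp: in_set_conv_nth image_iff)
  moreover have "(vec_of_list (V ! c) :: (real, 'd) vec) = vertex V c" if "c < Suc CARD('d)" for c
    using pad_vec_full[where 'n='d, of "V ! c"] assms that by (simp add: vertex_def)
  ultimately show ?thesis
    by (auto simp: image_iff)
qed

context
  fixes p :: "nat \<Rightarrow> real"
  assumes p: "\<forall>i\<in>{1..CARD('d::{finite,linorder})}. p i \<noteq> 0"
begin

abbreviation simplex_vertices :: "real list list \<Rightarrow> (real, 'd) vec set" where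
  "simplex_vertices V \<equiv> vertex V ` {..<Suc CARD('d)}"

lemma top_layer: "tessellation_layer p CARD('d) TYPE('d)"
  using tessellation_layer_le_card p by blast

lemma tess_eq: "(tess p :: (real, 'd) vec set set) = (\<lambda>V. convex hull (simplex_vertices V)) ` vertex_lists p CARD('d)"
proof -
  have "tess_vertices p CARD('d) = vertex_lists p CARD('d)"
    using tess_vertices_eq_vertex_lists[of p "CARD('d) - 1"] by simp
  moreover have "set (map vec_of_list V) = simplex_vertices V" if "V \<in> vertex_lists p CARD('d)" for V
    using set_map_vec_of_list tessellation_layer_base[OF top_layer that] by blast
  ultimately show ?thesis
    unfolding tess_def by (auto simp: image_iff)
qed

lemma affine_independent_simplex_vertices:
  "V \<in> vertex_lists p CARD('d) \<Longrightarrow> \<not> affine_dependent (simplex_vertices V)"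
  using tessellation_layer_base[OF top_layer] by (simp add: base_simplex_def)

lemma card_simplex_vertices: "V \<in> vertex_lists p CARD('d) \<Longrightarrow> card (simplex_vertices V) = Suc CARD('d)"
  using tessellation_layer_base[OF top_layer] by (simp add: base_simplex_def card_image)

lemma simplex_tess: "K \<in> (tess p :: (real, 'd) vec set set) \<Longrightarrow> int DIM((real, 'd) vec) simplex K"
proof -
  assume "K \<in> tess p"
  then obtain V where "V \<in> vertex_lists p CARD('d)" "K = convex hull (simplex_vertices V)"
    by (auto simp: tess_eq)
  then show ?thesis
    using simplex_convex_hull[of "simplex_vertices V" "int CARD('d)"]
      affine_independent_simplex_vertices card_simplex_vertices by simp
qed

lemma Union_tess: "\<Union>(tess p :: (real, 'd) vec set set) = UNIV"
proof -
  have "x \<in> lower_space CARD('d)" for x :: "(real, 'd) vec"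
    using index_rank_less_card by (auto simp: lower_space_def not_le[symmetric])
  then show ?thesis
    using tessellation_layer_cover[OF top_layer] by (auto simp: tess_eq)
qed

lemma tess_Int_face_of:
  assumes "K \<in> tess p" "K' \<in> tess p"
  shows "K \<inter> K' face_of (K :: (real, 'd) vec set)"
proof -
  obtain V V' where V: "V \<in> vertex_lists p CARD('d)" "K = convex hull (simplex_vertices V)"
    and V': "V' \<in> vertex_lists p CARD('d)" "K' = convex hull (simplex_vertices V')"
    using assms by (auto simp: tess_eq)
  show ?thesis
    unfolding V(2) V'(2)
    by (rule convex_hull_Int_face_of[OF affine_independent_simplex_vertices[OF V(1)]
          tessellation_layer_meet[OF top_layer V(1) V'(1)]])
qed

lemma interior_tess_disjoint:
  assumes "K \<in> tess p" "K' \<in> tess p" "K \<noteq> K'"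
  shows "interior K \<inter> interior (K' :: (real, 'd) vec set) = {}"
proof -
  obtain V V' where V: "V \<in> vertex_lists p CARD('d)" "K = convex hull (simplex_vertices V)"
    and V': "V' \<in> vertex_lists p CARD('d)" "K' = convex hull (simplex_vertices V')"
    using assms(1,2) by (auto simp: tess_eq)
  let ?S = "simplex_vertices V \<inter> simplex_vertices V'"
  have "?S \<noteq> simplex_vertices V"
  proof
    assume "?S = simplex_vertices V"
    then have "simplex_vertices V \<subseteq> simplex_vertices V'"
      by blast
    then have "simplex_vertices V = simplex_vertices V'"
      using card_simplex_vertices[OF V(1)] card_simplex_vertices[OF V'(1)] by (simp add: card_subset_eq)
    then show False
      using V V' assms(3) by simp
  qed
  then have "card ?S < card (simplex_vertices V)"
    by (intro psubset_card_mono) auto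
  then have "card ?S \<le> CARD('d)"
    using card_simplex_vertices[OF V(1)] by simp
  then have "interior (convex hull ?S) = {}"
    by (intro empty_interior_convex_hull) auto
  moreover have "K \<inter> K' = convex hull ?S"
    using tessellation_layer_meet[OF top_layer V(1) V'(1)] hull_mono[of ?S "simplex_vertices V"]
      hull_mono[of ?S "simplex_vertices V'"] V(2) V'(2) by blast
  ultimately show ?thesis
    by (simp flip: interior_Int)
qed

lemma simplicial_tessellation_tess: "simplicial_tessellation (tess p :: (real, 'd) vec set set)"
  unfolding simplicial_tessellation_def
  using simplex_tess Union_tess interior_tess_disjoint by blast

lemma face_to_face_mesh_tess: "F \<subseteq> tess p \<Longrightarrow> face_to_face_mesh (F :: (real, 'd) vec set set)"
proof -
  assume F: "F \<subseteq> tess p"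
  have "K \<inter> K' face_of K \<and> K \<inter> K' face_of K'" if "K \<in> F" "K' \<in> F" for K K'
    using tess_Int_face_of[of K K'] tess_Int_face_of[of K' K] F that by (auto simp: Int_commute)
  then show ?thesis
    unfolding face_to_face_mesh_def by blast
qed

end

section \<open>Volumes\<close>

text \<open>The change-of-variables theorems for \<open>real ^ 'n\<close> need a well-ordered index type; the
  index type of the statement is only linearly ordered, so we transport to an order-isomorphic
  copy.\<close>

typedef 'a wellordered = "UNIV :: 'a set"
  by simp

instantiation wellordered :: ("{finite,linorder}") linorder
begin

definition less_eq_wellordered :: "'a wellordered \<Rightarrow> 'a wellordered \<Rightarrow> bool" where
  "less_eq_wellordered x y \<longleftrightarrow> Rep_wellordered x \<le> Rep_wellordered y"

definition less_wellordered :: "'a wellordered \<Rightarrow> 'a wellordered \<Rightarrow> bool" where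
  "less_wellordered x y \<longleftrightarrow> Rep_wellordered x < Rep_wellordered y"

instance
  by standard
    (auto simp: less_eq_wellordered_def less_wellordered_def Rep_wellordered_inject[symmetric] less_le_not_le)

end

instance wellordered :: ("{finite,linorder}") finite
proof
  have "(UNIV :: 'a wellordered set) = Abs_wellordered ` UNIV"
    by (metis Rep_wellordered_inverse surj_def)
  then show "finite (UNIV :: 'a wellordered set)"
    by (metis finite finite_imageI)
qed

instance wellordered :: ("{finite,linorder}") wellorder
proof
  fix P :: "'a wellordered \<Rightarrow> bool" and a :: "'a wellordered"
  assume step: "\<And>x. (\<And>y. y < x \<Longrightarrow> P y) \<Longrightarrow> P x"
  show "P a"
  proof (induction a rule: measure_induct_rule[of "\<lambda>x. index_rank (Rep_wellordered x)"])
    case (less x)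
    show ?case
    proof (rule step)
      fix y assume "y < x"
      then show "P y"
        by (intro less) (simp add: less_wellordered_def index_rank_less_iff)
    qed
  qed
qed

lemma card_wellordered: "CARD('a::{finite,linorder} wellordered) = CARD('a)"
  using type_definition.card[OF type_definition_wellordered] by simp

lemma index_rank_wellordered:
  "index_rank (x :: 'a::{finite,linorder} wellordered) = index_rank (Rep_wellordered x)"
proof -
  have "{j. j < x} = Abs_wellordered ` {j. j < Rep_wellordered x}"
    by (auto simp: less_wellordered_def image_iff Abs_wellordered_inverse) (metis Rep_wellordered_inverse)
  moreover have "inj_on Abs_wellordered {j :: 'a. j < Rep_wellordered x}"
    by (simp add: Abs_wellordered_inject inj_on_def)
  ultimately show ?thesis
    by (simp add: index_rank_def card_image)
qed

definition to_wellordered :: "(real, 'a::{finite,linorder}) vec \<Rightarrow> (real, 'a wellordered) vec" where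
  "to_wellordered x = (\<chi> i. x $ Rep_wellordered i)"

lemma to_wellordered_pad_vec: "to_wellordered (pad_vec xs) = pad_vec xs"
  by (auto simp: to_wellordered_def pad_vec_def vec_eq_iff index_rank_wellordered)

lemma inj_to_wellordered: "inj to_wellordered"
proof
  fix x y :: "(real, 'a::{finite,linorder}) vec"
  assume "to_wellordered x = to_wellordered y"
  then have "x $ Rep_wellordered (Abs_wellordered i) = y $ Rep_wellordered (Abs_wellordered i)" for i
    by (simp add: to_wellordered_def vec_eq_iff)
  then show "x = y"
    by (simp add: vec_eq_iff Abs_wellordered_inverse)
qed

lemma bounded_linear_to_wellordered: "bounded_linear to_wellordered"
  by (auto simp: linear_iff to_wellordered_def vec_eq_iff intro: linear_conv_bounded_linear[THEN iffD1])

lemma to_wellordered_box: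
  "to_wellordered -` box l u = box (\<chi> i. l $ Abs_wellordered i) (\<chi> i. u $ Abs_wellordered i)"
proof -
  have "to_wellordered x \<in> box l u \<longleftrightarrow> x \<in> box (\<chi> i. l $ Abs_wellordered i) (\<chi> i. u $ Abs_wellordered i)" for x
  proof -
    have "to_wellordered x \<in> box l u
        \<longleftrightarrow> (\<forall>i. l $ i < x $ Rep_wellordered i \<and> x $ Rep_wellordered i < u $ i)"
      by (simp add: mem_box_cart to_wellordered_def)
    also have "\<dots> \<longleftrightarrow> (\<forall>i. l $ Abs_wellordered i < x $ i \<and> x $ i < u $ Abs_wellordered i)"
      by (metis Abs_wellordered_inverse Rep_wellordered_inverse UNIV_I)
    finally show ?thesis
      by (simp add: mem_box_cart)
  qed
  then show ?thesis
    by auto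
qed

lemma prod_Basis_vec:
  "(\<Prod>b\<in>(Basis :: (real, 'a::finite) vec set). f b) = (\<Prod>i\<in>UNIV. f (axis i 1))"
proof -
  have inj: "inj (\<lambda>i::'a. axis i (1::real))"
    by (auto simp: inj_def axis_eq_axis)
  have "(Basis :: (real, 'a) vec set) = range (\<lambda>i. axis i 1)"
    by (auto simp: Basis_vec_def)
  then show ?thesis
    by (simp only: prod.reindex[OF inj] o_def \<open>Basis = range (\<lambda>i. axis i 1)\<close>)
qed

lemma borel_measurable_to_wellordered:
  "to_wellordered \<in> borel_measurable (lborel :: (real, 'a::{finite,linorder}) vec measure)"
proof -
  have "to_wellordered \<in> borel_measurable (borel :: (real, 'a) vec measure)"
    by (intro borel_measurable_continuous_onI linear_continuous_on bounded_linear_to_wellordered)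
  then show ?thesis
    by simp
qed

lemma lborel_wellordered:
  "(lborel :: (real, 'a::{finite,linorder} wellordered) vec measure) = distr lborel borel to_wellordered"
proof (rule lborel_eqI)
  note meas = borel_measurable_to_wellordered[where 'a='a]
  fix l u :: "(real, 'a wellordered) vec"
  assume lu: "\<And>b. b \<in> Basis \<Longrightarrow> l \<bullet> b \<le> u \<bullet> b"
  let ?l = "\<chi> i. l $ Abs_wellordered i" and ?u = "\<chi> i. u $ Abs_wellordered i"
  have "l $ Abs_wellordered i \<le> u $ Abs_wellordered i" for i
    using lu[of "axis (Abs_wellordered i) 1"] by (simp add: inner_axis)
  then have "emeasure (distr lborel borel to_wellordered) (box l u) = (\<Prod>b\<in>Basis. (?u - ?l) \<bullet> b)"
    by (simp add: emeasure_distr[OF meas] to_wellordered_box emeasure_lborel_box_eq box_ne_empty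
        prod_Basis_vec inner_axis Basis_vec_def)
  moreover have "(\<Prod>b\<in>Basis. (?u - ?l) \<bullet> b) = (\<Prod>i\<in>UNIV. u $ Abs_wellordered i - l $ Abs_wellordered i)"
    by (simp add: prod_Basis_vec inner_axis)
  moreover have "\<dots> = (\<Prod>j\<in>UNIV. u $ j - l $ j)"
    by (rule prod.reindex_bij_witness[of _ Rep_wellordered Abs_wellordered])
       (auto simp: Abs_wellordered_inverse Rep_wellordered_inverse)
  moreover have "\<dots> = (\<Prod>b\<in>Basis. (u - l) \<bullet> b)"
    by (simp add: prod_Basis_vec inner_axis)
  ultimately show "emeasure (distr lborel borel to_wellordered) (box l u) = (\<Prod>b\<in>Basis. (u - l) \<bullet> b)"
    by simp
qed simp

lemma measure_to_wellordered_image: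
  assumes "compact (S :: (real, 'a::{finite,linorder}) vec set)"
  shows "measure lebesgue (to_wellordered ` S) = measure lebesgue S"
proof -
  note meas = borel_measurable_to_wellordered[where 'a='a]
  have cpt: "compact (to_wellordered ` S)"
    by (rule compact_continuous_image[OF linear_continuous_on[OF bounded_linear_to_wellordered] assms])
  have "to_wellordered -` (to_wellordered ` S) = S"
    by (rule inj_vimage_image_eq[OF inj_to_wellordered])
  have "measure lborel (to_wellordered ` S) = measure (distr lborel borel to_wellordered) (to_wellordered ` S)"
    by (simp add: lborel_wellordered[symmetric])
  also have "\<dots> = measure lborel S"
    using cpt \<open>to_wellordered -` (to_wellordered ` S) = S\<close>
    by (simp add: measure_def emeasure_distr[OF meas] compact_imp_closed borel_closed)
  finally show ?thesis
    using assms cpt by (simp add: compact_imp_closed borel_closed)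
qed

lemma measure_convex_hull_affine_image:
  fixes G :: "(real, 'w::{finite,wellorder}) vec \<Rightarrow> (real, 'w) vec"
  assumes "linear G" "finite X"
  shows "measure lebesgue (convex hull ((\<lambda>y. b + G y) ` X)) = \<bar>det (matrix G)\<bar> * measure lebesgue (convex hull X)"
proof -
  have "convex hull ((\<lambda>y. b + G y) ` X) = (\<lambda>y. b + y) ` (G ` (convex hull X))"
    using convex_hull_translation[of b "G ` X"] convex_hull_linear_image[OF assms(1), of X]
    by (simp add: image_image)
  then show ?thesis
    using measure_linear_image[OF assms(1) lmeasurable_compact[OF finite_imp_compact_convex_hull[OF assms(2)]]]
    by (simp add: measure_translation)
qed

lemma det_matrix_add_rank_one:
  fixes f :: "(real, 'n::{finite,wellorder}) vec \<Rightarrow> real"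
  assumes "linear f"
    and triangular: "(\<forall>i j. i < j \<longrightarrow> u $ i * f (axis j 1) = 0) \<or> (\<forall>i j. j < i \<longrightarrow> u $ i * f (axis j 1) = 0)"
  shows "det (matrix (\<lambda>y. y + f y *\<^sub>R u)) = (\<Prod>i\<in>UNIV. 1 + u $ i * f (axis i 1))"
proof -
  have entry: "matrix (\<lambda>y. y + f y *\<^sub>R u) $ i $ j = (if i = j then 1 else 0) + u $ i * f (axis j 1)" for i j
    by (simp add: matrix_def axis_def mult.commute)
  from triangular show ?thesis
  proof
    assume "\<forall>i j. i < j \<longrightarrow> u $ i * f (axis j 1) = 0"
    then show ?thesis
      by (subst det_lowerdiagonal) (auto simp: entry)
  next
    assume "\<forall>i j. j < i \<longrightarrow> u $ i * f (axis j 1) = 0"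
    then show ?thesis
      by (subst det_upperdiagonal) (auto simp: entry)
  qed
qed

text \<open>Thickening adds the unit steps in the coordinates \<open>m, \<dots>, d - 1\<close> at the apex \<open>x0\<close>; for
  a simplex in \<open>lower_space m\<close> this multiplies the \<open>m\<close>-volume by \<open>m! / d!\<close>.\<close>

definition thicken :: "(real, 'w::{finite,linorder}) vec set \<Rightarrow> (real, 'w) vec \<Rightarrow> nat \<Rightarrow> (real, 'w) vec set" where
  "thicken X x0 m = X \<union> (\<lambda>k. x0 + basis_vec k) ` {m..<CARD('w)}"

lemma thicken_full: "thicken (X :: (real, 'w::{finite,linorder}) vec set) x0 CARD('w) = X"
  by (simp add: thicken_def)

lemma measure_thicken_origin:
  "measure lebesgue (convex hull (thicken {0 :: (real, 'w::{finite,wellorder}) vec} 0 0)) = 1 / fact CARD('w)"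
proof -
  have "{0..<CARD('w)} = index_rank ` (UNIV :: 'w set)"
    using bij_betw_index_rank[where 'n='w] by (auto simp: bij_betw_def)
  then have "(basis_vec ` {0..<CARD('w)} :: (real, 'w) vec set) = Basis"
    by (auto simp: image_image basis_vec_index_rank Basis_vec_def)
  then have "thicken {0 :: (real, 'w) vec} 0 0 = insert 0 Basis"
    by (simp add: thicken_def)
  moreover have "measure lebesgue (convex hull (insert 0 (Basis :: (real, 'w) vec set)))
      = measure lborel (convex hull (insert 0 (Basis :: (real, 'w) vec set)))"
    by (simp add: finite_imp_compact_convex_hull compact_imp_closed borel_closed)
  ultimately show ?thesis
    by (simp add: content_std_simplex)
qed

definition tail_sum :: "nat \<Rightarrow> (real, 'w::{finite,linorder}) vec \<Rightarrow> real" where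
  "tail_sum m y = (\<Sum>i | m \<le> index_rank i. y $ i)"

lemma linear_tail_sum: "linear (tail_sum m)"
  by (auto simp: linear_iff tail_sum_def sum.distrib sum_distrib_left)

lemma tail_sum_lower_space: "y \<in> lower_space m \<Longrightarrow> tail_sum m y = 0"
  by (auto simp: lower_space_def tail_sum_def intro!: sum.neutral)

lemma tail_sum_axis: "tail_sum m (axis j 1) = (if m \<le> index_rank j then 1 else 0)"
  by (simp add: tail_sum_def axis_def sum.delta' cong: if_cong)

lemma tail_sum_basis_vec:
  assumes "k \<in> {m..<CARD('w::{finite,linorder})}"
  shows "tail_sum m (basis_vec k :: (real, 'w) vec) = 1"
proof -
  obtain j :: 'w where "index_rank j = k"
    using ex_index_rank_eq[where 'n='w, of k] assms by auto
  then show ?thesis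
    using assms tail_sum_axis[of m j] by (auto simp: basis_vec_index_rank[symmetric])
qed

lemma det_matrix_shear:
  fixes u :: "(real, 'w::{finite,wellorder}) vec"
  assumes "u \<in> lower_space m"
  shows "det (matrix (\<lambda>y. y + tail_sum m y *\<^sub>R u)) = 1"
proof -
  have u: "u $ i = 0" if "m \<le> index_rank i" for i
    using assms that by (auto simp: lower_space_def)
  have "u $ i * tail_sum m (axis j 1) = 0" if "j < i" for i j
  proof (cases "m \<le> index_rank i")
    case False
    then have "\<not> m \<le> index_rank j"
      using that index_rank_less_iff[of j i] by simp
    then show ?thesis
      by (simp add: tail_sum_axis)
  qed (use u in simp)
  then have "det (matrix (\<lambda>y. y + tail_sum m y *\<^sub>R u)) = (\<Prod>i\<in>UNIV. 1 + u $ i * tail_sum m (axis i 1))"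
    using det_matrix_add_rank_one[OF linear_tail_sum, of u] by blast
  also have "\<dots> = 1"
    using u by (intro prod.neutral) (simp add: tail_sum_axis)
  finally show ?thesis .
qed

text \<open>Moving the apex is a shear fixing the first \<open>m\<close> coordinates.\<close>

lemma measure_thicken_move_apex:
  fixes X :: "(real, 'w::{finite,wellorder}) vec set"
  assumes X: "finite X" "X \<subseteq> lower_space m" and x: "x0 \<in> lower_space m" "x1 \<in> lower_space m"
  shows "measure lebesgue (convex hull (thicken X x0 m)) = measure lebesgue (convex hull (thicken X x1 m))"
proof -
  define H where "H y = y + tail_sum m y *\<^sub>R (x1 - x0)" for y :: "(real, 'w) vec"
  have lin: "linear (tail_sum m :: (real, 'w) vec \<Rightarrow> real)"
    by (rule linear_tail_sum)
  have "H ` X = X"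
    using X(2) tail_sum_lower_space by (force simp: H_def)
  moreover have "H ` ((\<lambda>k. x0 + basis_vec k) ` {m..<CARD('w)}) = (\<lambda>k. x1 + basis_vec k) ` {m..<CARD('w)}"
    using tail_sum_lower_space[OF x(1)] tail_sum_basis_vec[where 'w='w] linear_add[OF lin]
    by (auto simp: H_def image_image algebra_simps)
  moreover have "det (matrix H) = 1"
    unfolding H_def using x by (intro det_matrix_shear subspace_diff[OF subspace_lower_space])
  moreover have "linear H"
    unfolding linear_iff H_def by (simp add: linear_add[OF lin] linear_scale[OF lin] scaleR_add_left scaleR_add_right)
  ultimately show ?thesis
    using measure_convex_hull_affine_image[of H "thicken X x0 m" 0] X(1) by (simp add: thicken_def image_Un)
qed

lemma independent_differences_affine_independent:
  fixes b :: "nat \<Rightarrow> 'a::real_vector"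
  assumes b_inj: "inj_on b {..<Suc l}" and ind: "\<not> affine_dependent (b ` {..<Suc l})"
  shows "\<not> dependent ((\<lambda>k. b k - b 0) ` {1..l})"
proof -
  have "b ` {..<Suc l} = insert (b 0) (b ` {1..l})"
    by (auto simp: image_iff) (metis Suc_leI atLeastAtMost_iff less_Suc_eq_le not_gr0)
  moreover have "b 0 \<notin> b ` {1..l}"
  proof
    assume "b 0 \<in> b ` {1..l}"
    then obtain k where "k \<in> {1..l}" "b 0 = b k"
      by blast
    then show False
      using inj_onD[OF b_inj, of 0 k] by simp
  qed
  ultimately have "b ` {..<Suc l} - {b 0} = b ` {1..l}"
    by simp
  moreover have "b 0 \<in> b ` {..<Suc l}"
    by simp
  ultimately have "\<not> dependent ((\<lambda>x. - b 0 + x) ` (b ` {1..l}))"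
    using affine_dependent_iff_dependent2 ind by metis
  then show ?thesis
    unfolding image_image by (simp add: algebra_simps)
qed

lemma ex_linear_affine_index:
  fixes b :: "nat \<Rightarrow> 'a::real_vector"
  assumes b_inj: "inj_on b {..<Suc l}" and ind: "\<not> affine_dependent (b ` {..<Suc l})"
  obtains g :: "'a \<Rightarrow> real" where "linear g" "\<And>k. k < Suc l \<Longrightarrow> g (b k - b 0) = real k"
proof -
  define w where "w k = b k - b 0" for k
  have w_inj: "inj_on w {1..l}"
  proof (rule inj_onI)
    fix x y assume "x \<in> {1..l}" "y \<in> {1..l}" "w x = w y"
    then show "x = y"
      using inj_onD[OF b_inj, of x y] by (simp add: w_def)
  qed
  have "\<exists>g. linear g \<and> (\<forall>v\<in>w ` {1..l}. g v = real (the_inv_into {1..l} w v))"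
    by (rule linear_independent_extend)
       (use independent_differences_affine_independent[OF b_inj ind] in \<open>simp add: w_def\<close>)
  then obtain g :: "'a \<Rightarrow> real"
    where g: "linear g" "\<forall>v\<in>w ` {1..l}. g v = real (the_inv_into {1..l} w v)"
    by blast
  have "g (w k) = real k" if "k < Suc l" for k
  proof (cases "k = 0")
    case True
    then show ?thesis
      using linear_0[OF g(1)] by (simp add: w_def)
  next
    case False
    then have k: "k \<in> {1..l}"
      using that by auto
    then have "g (w k) = real (the_inv_into {1..l} w (w k))"
      using g(2) by blast
    then show ?thesis
      using the_inv_into_f_f[OF w_inj k] by simp
  qed
  then show ?thesis
    using that[OF g(1)] unfolding w_def by blast
qed

lemma ex_linear_window_functional:
  fixes a :: "nat \<Rightarrow> (real, 'n::{finite,linorder}) vec"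
  assumes base: "base_simplex l a"
  obtains g where "linear g"
    "\<And>k. k < Suc l \<Longrightarrow> g (a (colour (Suc l) (z + int k)) - a (colour (Suc l) z)) = real k"
proof -
  let ?b = "\<lambda>k. a (colour (Suc l) (z + int k))"
  have inj: "inj_on a {..<Suc l}" and ind: "\<not> affine_dependent (a ` {..<Suc l})"
    using base by (auto simp: base_simplex_def)
  have "inj_on ?b {..<Suc l}"
  proof (rule inj_onI)
    fix x y assume xy: "x \<in> {..<Suc l}" "y \<in> {..<Suc l}" "?b x = ?b y"
    then have "colour (Suc l) (z + int x) = colour (Suc l) (z + int y)"
      using inj_onD[OF inj] colour_less[of "Suc l"] by blast
    then show "x = y"
      using colour_eq_iff xy by auto
  qed
  moreover have "?b ` {..<Suc l} = a ` {..<Suc l}"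
    using colour_window_image[of "Suc l" z] image_image[of a "\<lambda>k. colour (Suc l) (z + int k)" "{..<Suc l}"]
    by simp
  ultimately show ?thesis
    using ex_linear_affine_index[of ?b l] ind that by auto
qed

lemma det_matrix_add_last_row:
  fixes g :: "(real, 'w::{finite,wellorder}) vec \<Rightarrow> real"
  assumes g: "linear g" and l: "l < CARD('w)"
  shows "det (matrix (\<lambda>y. y + (r * coord l y + g (lower_part l y)) *\<^sub>R basis_vec l)) = 1 + r"
proof -
  define f where "f y = r * coord l y + g (lower_part l y)" for y
  obtain i0 :: 'w where i0: "index_rank i0 = l"
    using ex_index_rank_eq l by blast
  have lin: "linear f"
    unfolding linear_iff f_def
    by (simp add: coord_simps lower_part_simps linear_add[OF g] linear_scale[OF g] algebra_simps)
  have f_axis: "f (axis j 1) = (if j = i0 then r else 0)" if "l \<le> index_rank j" for j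
  proof -
    have "lower_part l (axis j 1) = 0"
      using that by (simp add: lower_part_def axis_def vec_eq_iff)
    moreover have "coord l (axis j 1) = (if j = i0 then 1 else 0)"
      using coord_eq_nth[OF i0] by (auto simp: axis_def)
    ultimately show ?thesis
      using linear_0[OF g] by (simp add: f_def)
  qed
  have basis: "basis_vec l $ i = (if i = i0 then 1 else 0)" for i
    by (simp add: basis_vec_nth i0[symmetric] index_rank_eq_iff)
  have "basis_vec l $ i * f (axis j 1) = 0" if "i < j" for i j
  proof (cases "i = i0")
    case True
    then have "l < index_rank j"
      using that i0 index_rank_less_iff by metis
    then show ?thesis
      using f_axis[of j] that True by simp
  qed (simp add: basis)
  then have "det (matrix (\<lambda>y. y + f y *\<^sub>R basis_vec l)) = (\<Prod>i\<in>UNIV. 1 + basis_vec l $ i * f (axis i 1))"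
    using det_matrix_add_rank_one[OF lin] by blast
  also have "\<dots> = (\<Prod>i\<in>{i0}. 1 + basis_vec l $ i * f (axis i 1))"
    by (rule prod.mono_neutral_right) (auto simp: basis)
  also have "\<dots> = 1 + r"
    using f_axis[of i0] by (simp add: basis i0)
  finally show ?thesis
    by (simp add: f_def)
qed

lemma ex_lift_map:
  fixes a :: "nat \<Rightarrow> (real, 'w::{finite,wellorder}) vec"
  assumes base: "base_simplex l a" and l: "l < CARD('w)"
  obtains G where "linear G" "det (matrix G) = real (Suc l) * q"
    "\<And>k. k < Suc l \<Longrightarrow> G (a (colour (Suc l) (z + int k)) - a (colour (Suc l) z))
       = a (colour (Suc l) (z + int k)) - a (colour (Suc l) z) + (real k * q) *\<^sub>R basis_vec l"
    "\<And>k. l \<le> k \<Longrightarrow> G (basis_vec k) = (if k = l then (real (Suc l) * q) *\<^sub>R basis_vec l else basis_vec k)"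
proof -
  let ?n = "Suc l"
  let ?b = "\<lambda>k. a (colour ?n (z + int k))"
  obtain g where g: "linear g" "\<And>k. k < ?n \<Longrightarrow> g (?b k - ?b 0) = real k"
    using ex_linear_window_functional[OF base, of z] by auto
  define G where "G y = y + ((real ?n * q - 1) * coord l y + q * g (lower_part l y)) *\<^sub>R basis_vec l" for y
  have qg: "linear (\<lambda>y. q * g y)"
    unfolding linear_iff by (simp add: linear_add[OF g(1)] linear_scale[OF g(1)] algebra_simps)
  have "det (matrix G) = real ?n * q"
    using det_matrix_add_last_row[OF qg l, of "real ?n * q - 1"] by (simp add: G_def[abs_def])
  moreover have "linear G"
    unfolding linear_iff G_def
    by (simp add: coord_simps lower_part_simps linear_add[OF g(1)] linear_scale[OF g(1)] algebra_simps)
  moreover have "G (?b k - ?b 0) = (?b k - ?b 0) + (real k * q) *\<^sub>R basis_vec l" if "k < ?n" for k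
  proof -
    have "a c \<in> lower_space l" if "c < ?n" for c
      using base that by (auto simp: base_simplex_def)
    then have "?b k - ?b 0 \<in> lower_space l"
      by (intro subspace_diff[OF subspace_lower_space]) (simp_all add: colour_less)
    then show ?thesis
      using g(2)[OF that] by (simp add: G_def coord_lower_space lower_part_id mult.commute)
  qed
  moreover have "G (basis_vec k) = (if k = l then (real ?n * q) *\<^sub>R basis_vec l else basis_vec k)"
    if "l \<le> k" for k
    using that l linear_0[OF g(1)] by (simp add: G_def coord_basis_vec lower_part_basis_vec algebra_simps)
  ultimately show ?thesis
    using that by simp
qed

text \<open>The map of \<open>ex_lift_map\<close>, followed by a translation, fixes the base directions, moves
  the base vertex at position \<open>k\<close> of the window up by \<open>k q\<close> and sends the first extra unit
  step to the closing vertex at position \<open>l + 1\<close>.\<close>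

lemma measure_thicken_lift:
  fixes a :: "nat \<Rightarrow> (real, 'w::{finite,wellorder}) vec"
  assumes base: "base_simplex l a" and l: "l < CARD('w)" and q: "q \<noteq> 0"
  shows "measure lebesgue (convex hull (thicken (lift_window l q a z) (lift l q a z) (Suc l)))
    = real (Suc l) * \<bar>q\<bar> * measure lebesgue (convex hull (thicken (a ` {..<Suc l}) (a (colour (Suc l) z)) l))"
proof -
  let ?n = "Suc l" and ?D = "CARD('w)"
  let ?b = "\<lambda>k. a (colour ?n (z + int k))"
  define az where "az = a (colour ?n z)"
  define Bz where "Bz = lift l q a z"
  obtain G where linG: "linear G" and det: "det (matrix G) = real ?n * q"
    and G_base: "\<And>k. k < ?n \<Longrightarrow> G (?b k - az) = (?b k - az) + (real k * q) *\<^sub>R basis_vec l"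
    and G_basis: "\<And>k. l \<le> k \<Longrightarrow> G (basis_vec k) = (if k = l then (real ?n * q) *\<^sub>R basis_vec l else basis_vec k)"
    using ex_lift_map[OF base l, of q z] unfolding az_def by blast
  define F where "F y = (Bz - G az) + G y" for y
  have F_shift: "F (az + y) = Bz + G y" for y
    by (simp add: F_def linear_add[OF linG])
  have F_base: "F (?b k) = lift l q a (z + int k)" if "k < ?n" for k
    using F_shift[of "?b k - az"] G_base[OF that]
    by (simp add: Bz_def lift_def az_def algebra_simps)
  have lift_closing: "lift l q a (z + int ?n) = Bz + (real ?n * q) *\<^sub>R basis_vec l"
    using colour_add_period[of ?n z] by (simp add: Bz_def lift_def algebra_simps)
  have "a ` {..<?n} = ?b ` {..<?n}"
    using colour_window_image[of ?n z] by (metis image_image zero_less_Suc)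
  then have "F ` a ` {..<?n} = (\<lambda>k. lift l q a (z + int k)) ` {..<?n}"
    using F_base by (simp add: image_image)
  moreover have "F ` (\<lambda>k. az + basis_vec k) ` {l..<?D}
      = insert (lift l q a (z + int ?n)) ((\<lambda>k. Bz + basis_vec k) ` {?n..<?D})"
  proof -
    have "{l..<?D} = insert l {?n..<?D}"
      using l by auto
    then show ?thesis
      using F_shift G_basis lift_closing by (auto simp: image_image)
  qed
  moreover have "{..?n} = insert ?n {..<?n}"
    by auto
  ultimately have image: "(\<lambda>y. (Bz - G az) + G y) ` thicken (a ` {..<?n}) az l = thicken (lift_window l q a z) Bz ?n"
    by (auto simp: thicken_def lift_window_def image_Un F_def[symmetric])
  show ?thesis
    using measure_convex_hull_affine_image[OF linG, of "thicken (a ` {..<?n}) az l" "Bz - G az"]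
    unfolding image det by (simp add: thicken_def abs_mult az_def Bz_def)
qed

lemma measure_thicken_layer:
  fixes p :: "nat \<Rightarrow> real"
  assumes "m \<le> CARD('w::{finite,wellorder})" "\<forall>i\<in>{1..m}. p i \<noteq> 0" "V \<in> vertex_lists p m"
    and "x0 \<in> (vertex V ` {..<Suc m} :: (real, 'w) vec set)"
  shows "measure lebesgue (convex hull (thicken (vertex V ` {..<Suc m}) x0 m))
    = fact m * (\<Prod>i=1..m. \<bar>p i\<bar>) / fact CARD('w)"
  using assms
proof (induction m arbitrary: V x0)
  case 0
  then have "V = [[]]" "x0 = 0"
    by (auto simp: vertex_def pad_vec_def vec_eq_iff)
  moreover have "(vertex [[]] ` {..<Suc 0} :: (real, 'w) vec set) = {0}"
    by (auto simp: vertex_def pad_vec_def vec_eq_iff)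
  ultimately show ?case
    using measure_thicken_origin by simp
next
  case (Suc l)
  let ?q = "p (Suc l)"
  obtain A z where A: "A \<in> vertex_lists p l" "V = next_vertices p l (A, z)"
    using Suc.prems(3) by (rule vertex_lists_SucE)
  have l: "l < CARD('w)" "?q \<noteq> 0"
    using Suc.prems by auto
  have layer: "tessellation_layer p l TYPE('w)"
    by (rule tessellation_layer_le_card) (use Suc.prems in auto)
  have base: "base_simplex l (vertex A :: nat \<Rightarrow> (real, 'w) vec)"
    by (rule base_simplex_vertex[OF layer l A(1)])
  have vertices: "(vertex V ` {..<Suc (Suc l)} :: (real, 'w) vec set) = lift_window l ?q (vertex A) z"
    unfolding A(2) by (rule vertex_image_next_layer[OF layer l A(1)])
  have apex: "(lift l ?q (vertex A) z :: (real, 'w) vec) \<in> lift_window l ?q (vertex A) z"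
    unfolding lift_window_def by (rule image_eqI[of _ _ 0]) auto
  have fin: "finite (lift_window l ?q (vertex A) z :: (real, 'w) vec set)"
    by (simp add: lift_window_def)
  have window_lower: "(lift_window l ?q (vertex A) z :: (real, 'w) vec set) \<subseteq> lower_space (Suc l)"
    by (rule order_trans[OF hull_subset convex_hull_lift_window_subset[OF layer l A(1)]])
  have "x0 \<in> lower_space (Suc l)" "(lift l ?q (vertex A) z :: (real, 'w) vec) \<in> lower_space (Suc l)"
    using window_lower Suc.prems(4) apex vertices by auto
  from measure_thicken_move_apex[OF fin window_lower this]
  have "measure lebesgue (convex hull (thicken (vertex V ` {..<Suc (Suc l)}) x0 (Suc l)))
      = measure lebesgue (convex hull (thicken (lift_window l ?q (vertex A) z :: (real, 'w) vec set)
          (lift l ?q (vertex A) z) (Suc l)))"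
    unfolding vertices .
  also have "\<dots> = real (Suc l) * \<bar>?q\<bar>
      * measure lebesgue (convex hull (thicken (vertex A ` {..<Suc l} :: (real, 'w) vec set)
          (vertex A (colour (Suc l) z)) l))"
    by (rule measure_thicken_lift[OF base l])
  also have "\<dots> = real (Suc l) * \<bar>?q\<bar> * (fact l * (\<Prod>i=1..l. \<bar>p i\<bar>) / fact CARD('w))"
    using Suc.IH[OF _ _ A(1), of "vertex A (colour (Suc l) z)"] Suc.prems(1,2) colour_less[of "Suc l" z]
    by simp
  also have "\<dots> = fact (Suc l) * (\<Prod>i=1..Suc l. \<bar>p i\<bar>) / fact CARD('w)"
    by (simp add: prod.nat_ivl_Suc' algebra_simps)
  finally show ?case .
qed

lemma measure_tess:
  assumes p: "\<forall>i\<in>{1..CARD('d::{finite,linorder})}. p i \<noteq> 0"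
    and K: "K \<in> (tess p :: (real, 'd) vec set set)"
  shows "measure lebesgue K = (\<Prod>i=1..CARD('d). \<bar>p i\<bar>)"
proof -
  obtain V where V: "V \<in> vertex_lists p CARD('d)" "K = convex hull (vertex V ` {..<Suc CARD('d)})"
    using K tess_eq[OF p] by auto
  have "to_wellordered ` K = convex hull (to_wellordered ` vertex V ` {..<Suc CARD('d)})"
    unfolding V(2) by (rule convex_hull_linear_image[OF bounded_linear.linear[OF bounded_linear_to_wellordered]])
  also have "to_wellordered ` vertex V ` {..<Suc CARD('d)} = (vertex V ` {..<Suc CARD('d)} :: (real, 'd wellordered) vec set)"
    by (simp add: image_image vertex_def to_wellordered_pad_vec)
  finally have "to_wellordered ` K = convex hull (vertex V ` {..<Suc CARD('d)} :: (real, 'd wellordered) vec set)" .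
  moreover have "measure lebesgue (convex hull (vertex V ` {..<Suc CARD('d)} :: (real, 'd wellordered) vec set))
      = (\<Prod>i=1..CARD('d). \<bar>p i\<bar>)"
    using measure_thicken_layer[where 'w="'d wellordered", of "CARD('d)" p V "vertex V 0"] p V(1)
    by (simp add: card_wellordered thicken_full[where 'w="'d wellordered", unfolded card_wellordered])
  moreover have "compact K"
    using V(2) by (simp add: finite_imp_compact_convex_hull)
  ultimately show ?thesis
    using measure_to_wellordered_image by metis
qed

theorem theorem1:
  fixes p :: "nat \<Rightarrow> real"
  assumes "\<forall>i\<in>{1..CARD('d::{finite,linorder})}. p i \<noteq> 0"
  shows "simplicial_tessellation (tess p :: (real ^ ('d::{finite,linorder})) set set)
    \<and> (\<forall>K \<in> (tess p :: (real ^ ('d::{finite,linorder})) set set).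
          measure lebesgue K = (\<Prod>i=1..CARD('d). \<bar>p i\<bar>))
    \<and> (\<forall>F. F \<subseteq> (tess p :: (real ^ ('d::{finite,linorder})) set set) \<and> finite F \<and> connected (\<Union>F)
          \<longrightarrow> face_to_face_mesh F)"
  using simplicial_tessellation_tess[OF assms] measure_tess[OF assms] face_to_face_mesh_tess[OF assms]
  by blast

end
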